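(* Let $k,l$ be positive integers, let $\square_{k,l}$ be the rectangular Young diagram with $k$ rows and $l$ columns, and let $V_{k,l}\subset\mathrm{Fun}_0(\mathbb Y)$ be the finite-dimensional subspace spanned by the vectors $\delta_\lambda$ with $\lambda\subseteq\square_{k,l}$. If $z=k$ and $z'=-l$, then $V_{k,l}$ is invariant under the operators $E,F,H$ defined in the context, and the resulting action of $\mathfrak{sl}(2,\mathbb C)$ on $V_{k,l}$ lifts to a representation of the group $SL(2,\mathbb C)$.
   Context: $\mathbb Y$ is the set of Young diagrams (including $\varnothing$), $|\lambda|$ the number of boxes; $\mu\nearrow\lambda$ (equivalently $\lambda\searrow\mu$) means $\mu\subset\lambda$, $|\lambda|=|\mu|+1$. For a skew diagram $\theta$, $(z)_\theta=\prod_{(i,j)\in\theta}(z+j-i)$, where $(i,j)$ is the box in row $i$ and column $j$. $\mathrm{Fun}_0(\mathbb Y)$ is the complex vector space of finitely supported functions on $\mathbb Y$ with basis $\{\delta_\lambda\}$ (indicator functions). For complex $z,z'$ define operators on $\mathrm{Fun}_0(\mathbb Y)$: $E\delta_\lambda=\sum_{\lambda^\bullet\searrow\lambda}(z)_{\lambda^\bullet/\lambda}(z')_{\lambda^\bullet/\lambda}\delta_{\lambda^\bullet}$, $F\delta_\lambda=-\sum_{\lambda_\bullet\nearrow\lambda}\delta_{\lambda_\bullet}$, $H\delta_\lambda=(zz'+2|\lambda|)\delta_\lambda$. These satisfy $[H,E]=2E$, $[H,F]=-2F$, $[E,F]=H$, hence define a representation of $\mathfrak{sl}(2,\mathbb C)$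 (with $E,F,H$ corresponding to the standard basis matrices $\begin{pmatrix}0&1\\0&0\end{pmatrix},\begin{pmatrix}0&0\\1&0\end{pmatrix},\begin{pmatrix}1&0\\0&-1\end{pmatrix}$). *)

theory Defs
  imports "HOL-Analysis.Analysis"
begin

text \<open>Young diagrams are modelled as finite sets of boxes (i,j), i = row, j = column,
  indices starting at 1, closed under moving up/left.\<close>

type_synonym diagram = "(nat \<times> nat) set"

definition young :: "diagram \<Rightarrow> bool" where
  "young Y \<longleftrightarrow> finite Y \<and>
     (\<forall>i j. (i, j) \<in> Y \<longrightarrow> 1 \<le> i \<and> 1 \<le> j \<and>
        (\<forall>i' j'. 1 \<le> i' \<and> i' \<le> i \<and> 1 \<le> j' \<and> j' \<le> j \<longrightarrow> (i', j') \<in> Y))"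

definition size_diag :: "diagram \<Rightarrow> nat" where
  "size_diag Y = card Y"

definition covers :: "diagram \<Rightarrow> diagram \<Rightarrow> bool" (infix "\<nearrow>" 50) where
  "mu \<nearrow> lam \<longleftrightarrow> young mu \<and> young lam \<and> mu \<subseteq> lam \<and> card lam = card mu + 1"

definition content :: "nat \<times> nat \<Rightarrow> int" where
  "content b = int (snd b) - int (fst b)"

definition gen_poch :: "complex \<Rightarrow> diagram \<Rightarrow> complex" where
  "gen_poch z theta = (\<Prod>b\<in>theta. z + of_int (content b))"

text \<open>Fun_0(Y): finitely supported complex functions on Young diagrams
  (extended by zero to non-diagrams).\<close>
definition Fun0 :: "(diagram \<Rightarrow> complex) set" where
  "Fun0 = {f. finite {mu. f mu \<noteq> 0} \<and> (\<forall>mu. f mu \<noteq> 0 \<longrightarrow> young mu)}"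

text \<open>The operators E, F, H, written on coefficient functions:
  f = sum_lambda f(lambda) delta_lambda.\<close>
definition opE :: "complex \<Rightarrow> complex \<Rightarrow> (diagram \<Rightarrow> complex) \<Rightarrow> diagram \<Rightarrow> complex" where
  "opE z z' f mu = (\<Sum>lam\<in>{lam. lam \<nearrow> mu}.
      gen_poch z (mu - lam) * gen_poch z' (mu - lam) * f lam)"

definition opF :: "(diagram \<Rightarrow> complex) \<Rightarrow> diagram \<Rightarrow> complex" where
  "opF f mu = - (\<Sum>lam\<in>{lam. mu \<nearrow> lam}. f lam)"

definition opH :: "complex \<Rightarrow> complex \<Rightarrow> (diagram \<Rightarrow> complex) \<Rightarrow> diagram \<Rightarrow> complex" where
  "opH z z' f mu = (z * z' + 2 * of_nat (size_diag mu)) * f mu"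

definition rect :: "nat \<Rightarrow> nat \<Rightarrow> diagram" where
  "rect k l = {1..k} \<times> {1..l}"

definition Vkl :: "nat \<Rightarrow> nat \<Rightarrow> (diagram \<Rightarrow> complex) set" where
  "Vkl k l = {f. \<forall>mu. f mu \<noteq> 0 \<longrightarrow> young mu \<and> mu \<subseteq> rect k l}"

definition SL2 :: "(complex^2^2) set" where
  "SL2 = {A. det A = 1}"

definition expE :: "complex \<Rightarrow> complex^2^2" where
  "expE t = vector [vector [1, t], vector [0, 1]]"
definition expF :: "complex \<Rightarrow> complex^2^2" where
  "expF t = vector [vector [1, 0], vector [t, 1]]"
definition expH :: "complex \<Rightarrow> complex^2^2" where
  "expH t = vector [vector [exp t, 0], vector [0, exp (- t)]]"

definition is_SL2_lift ::
  "(complex^2^2 \<Rightarrow> (diagram \<Rightarrow> complex) \<Rightarrow> diagram \<Rightarrow> complex) \<Rightarrow> (diagram \<Rightarrow> complex) set \<Rightarrow>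
   ((diagram \<Rightarrow> complex) \<Rightarrow> diagram \<Rightarrow> complex) \<Rightarrow>
   ((diagram \<Rightarrow> complex) \<Rightarrow> diagram \<Rightarrow> complex) \<Rightarrow>
   ((diagram \<Rightarrow> complex) \<Rightarrow> diagram \<Rightarrow> complex) \<Rightarrow> bool" where
  "is_SL2_lift rho V XE XF XH \<longleftrightarrow>
     (\<forall>A\<in>SL2. \<forall>f\<in>V. rho A f \<in> V) \<and>
     (\<forall>A\<in>SL2. \<forall>f\<in>V. \<forall>g\<in>V. rho A (\<lambda>mu. f mu + g mu) = (\<lambda>mu. rho A f mu + rho A g mu)) \<and>
     (\<forall>A\<in>SL2. \<forall>f\<in>V. \<forall>c. rho A (\<lambda>mu. c * f mu) = (\<lambda>mu. c * rho A f mu)) \<and>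
     (\<forall>f\<in>V. rho (mat 1) f = f) \<and>
     (\<forall>A\<in>SL2. \<forall>B\<in>SL2. \<forall>f\<in>V. rho (A ** B) f = rho A (rho B f)) \<and>
     (\<forall>f\<in>V. \<forall>mu. continuous_on SL2 (\<lambda>A. rho A f mu)) \<and>
     (\<forall>f\<in>V. \<forall>mu. ((\<lambda>t. rho (expE t) f mu) has_field_derivative XE f mu) (at 0)) \<and>
     (\<forall>f\<in>V. \<forall>mu. ((\<lambda>t. rho (expF t) f mu) has_field_derivative XF f mu) (at 0)) \<and>
     (\<forall>f\<in>V. \<forall>mu. ((\<lambda>t. rho (expH t) f mu) has_field_derivative XH f mu) (at 0))"

end

theory Submission
  imports Defs "HOL-Computational_Algebra.Polynomial"
begin

text \<open>Let m = k + l - 1. Reading the rows of a diagram mu inside the k \<times> l rectangle as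
  particles at the positions p_i = row_len mu (k - i) + i identifies these diagrams with the
  strictly increasing k-tuples in {0..m}, i.e. with the monomial basis of the exterior power
  \<Lambda>^k Sym^m(C^2). SL(2,C) acts on binary forms of degree m, hence on this exterior power,
  realised as alternating functions on k-tuples, and transporting the action back gives the
  representation. Its differential moves one particle by one step, which adds or removes a box;
  with delta_mu sent to \<Prod>_i (-1)^p_i (m - p_i)! times the wedge, E picks up the factor
  p (p - m - 1) = (z)(z') of the added box, F the factor -1, and H acts by
  \<Sum>_i (2 p_i - m) = z z' + 2|mu|.\<close>

subsection \<open>Diagrams in a rectangle\<close>

definition rect_diagrams :: "nat \<Rightarrow> nat \<Rightarrow> diagram set" where
  "rect_diagrams k l = {mu. young mu \<and> mu \<subseteq> rect k l}"

definition row_len :: "diagram \<Rightarrow> nat \<Rightarrow> nat" where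
  "row_len mu r = card {c. (r, c) \<in> mu}"

definition diagram_of_rows :: "nat \<Rightarrow> (nat \<Rightarrow> nat) \<Rightarrow> diagram" where
  "diagram_of_rows k L = Sigma {1..k} (\<lambda>r. {1..L r})"

lemma young_finite: "young mu \<Longrightarrow> finite mu"
  by (simp add: young_def)

lemma young_pos: "young mu \<Longrightarrow> (i, j) \<in> mu \<Longrightarrow> 1 \<le> i \<and> 1 \<le> j"
  unfolding young_def by blast

lemma young_downward_closed:
  assumes "young mu" "(i, j) \<in> mu" "1 \<le> i'" "i' \<le> i" "1 \<le> j'" "j' \<le> j"
  shows "(i', j') \<in> mu"
  using assms unfolding young_def by blast

lemma young_finite_row: "young mu \<Longrightarrow> finite {c. (r, c) \<in> mu}"
  by (rule finite_subset[of _ "snd ` mu"]) (force, simp add: young_finite)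

lemma young_row_eq:
  assumes y: "young mu" and r: "1 \<le> r"
  shows "{c. (r, c) \<in> mu} = {1..row_len mu r}"
proof (cases "{c. (r, c) \<in> mu} = {}")
  case True
  thus ?thesis by (simp add: row_len_def)
next
  case False
  let ?S = "{c. (r, c) \<in> mu}"
  define M where "M = Max ?S"
  have fin: "finite ?S" using young_finite_row[OF y] .
  have max: "(r, M) \<in> mu" using Max_in[OF fin False] by (simp add: M_def)
  have "?S = {1..M}"
  proof (intro equalityI subsetI)
    fix c assume "c \<in> ?S"
    thus "c \<in> {1..M}" using young_pos[OF y] Max_ge[OF fin] by (auto simp: M_def)
  next
    fix c assume "c \<in> {1..M}"
    thus "c \<in> ?S" using young_downward_closed[OF y max, of r c] r by simp
  qed
  thus ?thesis by (simp add: row_len_def)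
qed

lemma young_mem_iff_row_len:
  assumes "young mu"
  shows "(r, c) \<in> mu \<longleftrightarrow> 1 \<le> r \<and> 1 \<le> c \<and> c \<le> row_len mu r"
proof (cases "1 \<le> r")
  case True
  thus ?thesis using young_row_eq[OF assms True] by (metis atLeastAtMost_iff mem_Collect_eq)
next
  case False
  thus ?thesis using young_pos[OF assms] by auto
qed

lemma young_row_len_antimono:
  assumes y: "young mu" and "1 \<le> r" "r \<le> r'"
  shows "row_len mu r' \<le> row_len mu r"
proof -
  have "{c. (r', c) \<in> mu} \<subseteq> {c. (r, c) \<in> mu}"
    using assms young_mem_iff_row_len[OF y] young_downward_closed[OF y] by auto
  thus ?thesis unfolding row_len_def using card_mono young_finite_row[OF y] by blast
qed

lemma rect_diagram_row_len_le: "mu \<in> rect_diagrams k l \<Longrightarrow> row_len mu r \<le> l"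
  unfolding row_len_def
  by (rule order.trans[OF card_mono[of "{1..l}"]]) (auto simp: rect_diagrams_def rect_def)

lemma rect_diagram_eq_rows:
  assumes "mu \<in> rect_diagrams k l"
  shows "mu = diagram_of_rows k (row_len mu)"
proof -
  have y: "young mu" and sub: "mu \<subseteq> rect k l" using assms by (auto simp: rect_diagrams_def)
  show ?thesis
  proof (rule set_eqI)
    fix x :: "nat \<times> nat"
    obtain r c where x: "x = (r, c)" by fastforce
    show "x \<in> mu \<longleftrightarrow> x \<in> diagram_of_rows k (row_len mu)"
      using young_mem_iff_row_len[OF y, of r c] sub x by (auto simp: diagram_of_rows_def rect_def)
  qed
qed

lemma rect_diagram_mem_iff:
  "mu \<in> rect_diagrams k l \<Longrightarrow> (r, c) \<in> mu \<longleftrightarrow> r \<in> {1..k} \<and> c \<in> {1..row_len mu r}"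
  by (subst rect_diagram_eq_rows) (auto simp: diagram_of_rows_def)

lemma card_rect_diagram: "mu \<in> rect_diagrams k l \<Longrightarrow> card mu = (\<Sum>r=1..k. row_len mu r)"
  by (subst rect_diagram_eq_rows) (auto simp: diagram_of_rows_def card_SigmaI)

lemma row_len_diagram_of_rows:
  assumes "1 \<le> r" "r \<le> k"
  shows "row_len (diagram_of_rows k L) r = L r"
proof -
  have "{c. (r, c) \<in> diagram_of_rows k L} = {1..L r}"
    using assms by (auto simp: diagram_of_rows_def)
  thus ?thesis by (simp add: row_len_def)
qed

lemma diagram_of_rows_in_rect:
  assumes anti: "\<And>r r'. 1 \<le> r \<Longrightarrow> r \<le> r' \<Longrightarrow> r' \<le> k \<Longrightarrow> L r' \<le> L r"
    and bound: "\<And>r. 1 \<le> r \<Longrightarrow> r \<le> k \<Longrightarrow> L r \<le> l"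
  shows "diagram_of_rows k L \<in> rect_diagrams k l"
proof -
  have "young (diagram_of_rows k L)"
    unfolding young_def diagram_of_rows_def
  proof (intro conjI allI impI)
    fix i j i' j'
    assume "(i, j) \<in> Sigma {1..k} (\<lambda>r. {1..L r})" "1 \<le> i' \<and> i' \<le> i \<and> 1 \<le> j' \<and> j' \<le> j"
    moreover from this have "L i \<le> L i'" using anti[of i' i] by auto
    ultimately show "(i', j') \<in> Sigma {1..k} (\<lambda>r. {1..L r})" by auto
  qed auto
  moreover have "diagram_of_rows k L \<subseteq> rect k l"
    using bound by (fastforce simp: diagram_of_rows_def rect_def intro: order.trans)
  ultimately show ?thesis by (simp add: rect_diagrams_def)
qed

lemma rect_diagram_eqI:
  assumes "mu \<in> rect_diagrams k l" "nu \<in> rect_diagrams k l"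
    and "\<And>r. 1 \<le> r \<Longrightarrow> r \<le> k \<Longrightarrow> row_len mu r = row_len nu r"
  shows "mu = nu"
proof -
  have "diagram_of_rows k (row_len mu) = diagram_of_rows k (row_len nu)"
    unfolding diagram_of_rows_def using assms(3) by (intro Sigma_cong) auto
  thus ?thesis using rect_diagram_eq_rows[OF assms(1)] rect_diagram_eq_rows[OF assms(2)] by simp
qed

lemma finite_rect_diagrams: "finite (rect_diagrams k l)"
  by (rule finite_subset[of _ "Pow (rect k l)"]) (auto simp: rect_diagrams_def rect_def)

lemma rect_diagram_subset_iff:
  assumes lam: "lam \<in> rect_diagrams k l" and mu: "mu \<in> rect_diagrams k l"
  shows "lam \<subseteq> mu \<longleftrightarrow> (\<forall>r\<in>{1..k}. row_len lam r \<le> row_len mu r)"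
proof
  assume "lam \<subseteq> mu"
  hence "{c. (r, c) \<in> lam} \<subseteq> {c. (r, c) \<in> mu}" for r by auto
  thus "\<forall>r\<in>{1..k}. row_len lam r \<le> row_len mu r"
    using mu card_mono[OF young_finite_row] by (auto simp: row_len_def rect_diagrams_def)
next
  assume "\<forall>r\<in>{1..k}. row_len lam r \<le> row_len mu r"
  thus "lam \<subseteq> mu"
    using rect_diagram_mem_iff[OF lam] rect_diagram_mem_iff[OF mu] by (fastforce intro: order.trans)
qed

lemma young_box_le_card:
  assumes y: "young lam" and x: "(i, j) \<in> lam"
  shows "i \<le> card lam \<and> j \<le> card lam"
proof -
  have "(\<lambda>a. (a, 1)) ` {1..i} \<subseteq> lam" "(\<lambda>a. (1, a)) ` {1..j} \<subseteq> lam"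
    using young_downward_closed[OF y x] young_pos[OF y x] by auto
  hence "card ((\<lambda>a. (a, 1::nat)) ` {1..i}) \<le> card lam" "card ((\<lambda>a. (1::nat, a)) ` {1..j}) \<le> card lam"
    using card_mono young_finite[OF y] by blast+
  thus ?thesis by (simp add: card_image inj_on_def)
qed

lemma finite_covering_diagrams: "finite {lam. mu \<nearrow> lam}"
proof (rule finite_subset)
  let ?N = "card mu + 1"
  show "{lam. mu \<nearrow> lam} \<subseteq> Pow ({1..?N} \<times> {1..?N})"
    using young_box_le_card young_pos by (fastforce simp: covers_def)
qed simp

lemma Vkl_iff: "f \<in> Vkl k l \<longleftrightarrow> (\<forall>mu. f mu \<noteq> 0 \<longrightarrow> mu \<in> rect_diagrams k l)"
  by (simp add: Vkl_def rect_diagrams_def)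

lemma Vkl_vanishes: "f \<in> Vkl k l \<Longrightarrow> mu \<notin> rect_diagrams k l \<Longrightarrow> f mu = 0"
  by (auto simp: Vkl_iff)

lemma covers_diff_singleton:
  assumes "lam \<nearrow> mu"
  obtains b where "mu - lam = {b}"
proof -
  have "finite mu" "lam \<subseteq> mu" "card mu = card lam + 1"
    using assms by (auto simp: covers_def young_def)
  hence "card (mu - lam) = 1" by (simp add: card_Diff_subset finite_subset)
  thus ?thesis using that by (meson card_1_singletonE)
qed

text \<open>A box leaving the rectangle through row k + 1 has content -k and one leaving through
  column l + 1 has content l, so the factor (z)(z') vanishes on it.\<close>
lemma opE_preserves_Vkl:
  assumes f: "f \<in> Vkl k l"
  shows "opE (of_nat k) (- of_nat l) f \<in> Vkl k l"
  unfolding Vkl_def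
proof (intro CollectI allI impI)
  fix mu assume "opE (of_nat k) (- of_nat l) f mu \<noteq> 0"
  then obtain lam where lam: "lam \<nearrow> mu"
    and nz: "gen_poch (of_nat k) (mu - lam) * gen_poch (- of_nat l) (mu - lam) * f lam \<noteq> 0"
    unfolding opE_def by (metis (mono_tags, lifting) mem_Collect_eq sum.neutral)
  have ym: "young mu" using lam by (simp add: covers_def)
  have lr: "lam \<subseteq> rect k l" using nz f by (auto simp: Vkl_def)
  obtain b where b: "mu - lam = {b}" using covers_diff_singleton[OF lam] .
  have "mu \<subseteq> rect k l"
  proof (rule ccontr)
    assume "\<not> mu \<subseteq> rect k l"
    then obtain i j where ij: "(i, j) \<in> mu" "i > k \<or> j > l"
      using young_pos[OF ym] by (fastforce simp: rect_def)
    hence "(k + 1, 1) \<in> mu \<or> (1, l + 1) \<in> mu"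
      using young_downward_closed[OF ym ij(1)] young_pos[OF ym ij(1)] by auto
    moreover have "(k + 1, 1) \<notin> lam" "(1, l + 1) \<notin> lam" using lr by (auto simp: rect_def)
    ultimately have "b = (k + 1, 1) \<or> b = (1, l + 1)" using b by (metis Diff_iff singletonD)
    thus False using nz by (auto simp: b gen_poch_def content_def)
  qed
  thus "young mu \<and> mu \<subseteq> rect k l" using ym by simp
qed

lemma opF_preserves_Vkl:
  assumes f: "f \<in> Vkl k l"
  shows "opF f \<in> Vkl k l"
  unfolding Vkl_def
proof (intro CollectI allI impI)
  fix mu assume "opF f mu \<noteq> 0"
  then obtain lam where "mu \<nearrow> lam" "f lam \<noteq> 0"
    unfolding opF_def by (metis (mono_tags, lifting) mem_Collect_eq neg_equal_0_iff_equal sum.neutral)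
  thus "young mu \<and> mu \<subseteq> rect k l" using f by (auto simp: Vkl_def covers_def)
qed

lemma opH_preserves_Vkl: "f \<in> Vkl k l \<Longrightarrow> opH z z' f \<in> Vkl k l"
  by (auto simp: Vkl_def opH_def)

subsection \<open>Particle positions\<close>

definition tuples :: "nat \<Rightarrow> nat \<Rightarrow> (nat \<Rightarrow> nat) set" where
  "tuples k m = PiE {..<k} (\<lambda>_. {..m})"

definition increasing_tuples :: "nat \<Rightarrow> nat \<Rightarrow> (nat \<Rightarrow> nat) set" where
  "increasing_tuples k m = {u \<in> tuples k m. strict_mono_on {..<k} u}"

text \<open>The Maya-diagram (particle) encoding of mu, listed from the bottom row upwards.\<close>
definition positions :: "nat \<Rightarrow> diagram \<Rightarrow> nat \<Rightarrow> nat" where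
  "positions k mu = (\<lambda>i. if i < k then row_len mu (k - i) + i else undefined)"

lemma finite_tuples: "finite (tuples k m)"
  by (simp add: tuples_def finite_PiE)

lemma tuples_le: "u \<in> tuples k m \<Longrightarrow> i < k \<Longrightarrow> u i \<le> m"
  by (auto simp: tuples_def PiE_def Pi_def)

lemma tuples_undefined: "u \<in> tuples k m \<Longrightarrow> \<not> i < k \<Longrightarrow> u i = undefined"
  by (auto simp: tuples_def PiE_def extensional_def)

lemma tuples_eqI: "u \<in> tuples k m \<Longrightarrow> v \<in> tuples k m \<Longrightarrow> (\<And>i. i < k \<Longrightarrow> u i = v i) \<Longrightarrow> u = v"
  unfolding tuples_def by (rule PiE_ext) auto

lemma tuples_upd: "s \<in> tuples k m \<Longrightarrow> j < k \<Longrightarrow> v \<le> m \<Longrightarrow> s(j := v) \<in> tuples k m"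
  unfolding tuples_def PiE_iff extensional_def by auto

lemma tuples_comp_permutes:
  assumes "t \<in> tuples k m" "s permutes {..<k}"
  shows "t \<circ> s \<in> tuples k m"
  unfolding tuples_def PiE_iff
proof (intro conjI ballI)
  fix i assume "i \<in> {..<k}"
  thus "(t \<circ> s) i \<in> {..m}" using permutes_in_image[OF assms(2)] tuples_le[OF assms(1)] by simp
next
  show "t \<circ> s \<in> extensional {..<k}"
    using permutes_not_in[OF assms(2)] tuples_undefined[OF assms(1)] by (auto simp: extensional_def)
qed

lemma bij_betw_tuples_comp_permutes:
  assumes "s permutes {..<k}"
  shows "bij_betw (\<lambda>u. u \<circ> s) (tuples k m) (tuples k m)"
proof (rule bij_betwI[where g = "\<lambda>u. u \<circ> inv s"])
  show "(\<lambda>u. u \<circ> s) \<in> tuples k m \<rightarrow> tuples k m" "(\<lambda>u. u \<circ> inv s) \<in> tuples k m \<rightarrow> tuples k m"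
    using tuples_comp_permutes assms permutes_inv[OF assms] by auto
  show "u \<circ> s \<circ> inv s = u" "u \<circ> inv s \<circ> s = u" for u
    using permutes_inv_o[OF assms] by (simp_all add: comp_assoc)
qed

lemma strict_mono_on_add_diff_le:
  assumes "strict_mono_on {..<k} (g :: nat \<Rightarrow> nat)" "i \<le> j" "j < k"
  shows "g i + (j - i) \<le> g j"
  using assms(2,3)
proof (induction j)
  case (Suc j)
  show ?case
  proof (cases "i = Suc j")
    case False
    hence "g i + (j - i) \<le> g j" "g j < g (Suc j)"
      using Suc strict_mono_onD[OF assms(1), of j "Suc j"] by simp_all
    thus ?thesis using False Suc.prems by simp
  qed simp
qed simp

lemma increasing_tuples_bounds:
  assumes "u \<in> increasing_tuples k m" "i < k"
  shows "i \<le> u i" "u i + k \<le> m + 1 + i"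
proof -
  have mono: "strict_mono_on {..<k} u" and le: "u (k - 1) \<le> m"
    using assms tuples_le[of u k m "k - 1"] by (auto simp: increasing_tuples_def)
  show "i \<le> u i" using strict_mono_on_add_diff_le[OF mono, of 0 i] assms(2) by simp
  show "u i + k \<le> m + 1 + i"
    using strict_mono_on_add_diff_le[OF mono, of i "k - 1"] le assms(2) by arith
qed

lemma positions_less: "i < k \<Longrightarrow> positions k mu i = row_len mu (k - i) + i"
  by (simp add: positions_def)

lemma positions_in_increasing_tuples:
  assumes mu: "mu \<in> rect_diagrams k l"
  shows "positions k mu \<in> increasing_tuples k (k + l - 1)"
proof -
  have y: "young mu" using mu by (simp add: rect_diagrams_def)
  have "positions k mu \<in> tuples k (k + l - 1)"
    unfolding tuples_def PiE_iff
  proof (intro conjI ballI)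
    fix i assume "i \<in> {..<k}"
    thus "positions k mu i \<in> {..k + l - 1}"
      using rect_diagram_row_len_le[OF mu, of "k - i"] by (simp add: positions_less)
  qed (simp add: positions_def extensional_def)
  moreover have "strict_mono_on {..<k} (positions k mu)"
  proof (rule strict_mono_onI)
    fix i j assume "i \<in> {..<k}" "j \<in> {..<k}" "i < j"
    moreover from this have "row_len mu (k - i) \<le> row_len mu (k - j)"
      by (intro young_row_len_antimono[OF y]) auto
    ultimately show "positions k mu i < positions k mu j" by (simp add: positions_less)
  qed
  ultimately show ?thesis by (simp add: increasing_tuples_def)
qed

lemma positions_in_tuples: "mu \<in> rect_diagrams k l \<Longrightarrow> positions k mu \<in> tuples k (k + l - 1)"
  using positions_in_increasing_tuples by (simp add: increasing_tuples_def)

lemma positions_inj: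
  assumes "mu \<in> rect_diagrams k l" "nu \<in> rect_diagrams k l" "positions k mu = positions k nu"
  shows "mu = nu"
proof (rule rect_diagram_eqI[OF assms(1,2)])
  fix r assume "1 \<le> r" "r \<le> k"
  thus "row_len mu r = row_len nu r" using fun_cong[OF assms(3), of "k - r"] by (simp add: positions_less)
qed

lemma increasing_tuple_eq_positions:
  assumes u: "u \<in> increasing_tuples k (k + l - 1)"
  obtains mu where "mu \<in> rect_diagrams k l" "u = positions k mu"
proof
  let ?L = "\<lambda>r. u (k - r) - (k - r)"
  have mono: "strict_mono_on {..<k} u" using u by (simp add: increasing_tuples_def)
  show mu: "diagram_of_rows k ?L \<in> rect_diagrams k l"
  proof (rule diagram_of_rows_in_rect)
    fix r r' assume "1 \<le> r" "r \<le> r'" "r' \<le> k"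
    thus "?L r' \<le> ?L r"
      using strict_mono_on_add_diff_le[OF mono, of "k - r'" "k - r"]
        increasing_tuples_bounds(1)[OF u, of "k - r'"] by arith
  next
    fix r assume "1 \<le> r" "r \<le> k"
    thus "?L r \<le> l" using increasing_tuples_bounds(2)[OF u, of "k - r"] by simp
  qed
  show "u = positions k (diagram_of_rows k ?L)"
  proof (rule tuples_eqI)
    show "u \<in> tuples k (k + l - 1)" using u by (simp add: increasing_tuples_def)
    show "positions k (diagram_of_rows k ?L) \<in> tuples k (k + l - 1)" by (rule positions_in_tuples[OF mu])
    fix i assume i: "i < k"
    hence "k - (k - i) = i" by simp
    thus "u i = positions k (diagram_of_rows k ?L) i"
      using i increasing_tuples_bounds(1)[OF u i] by (simp add: row_len_diagram_of_rows positions_less)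
  qed
qed

lemma permutes_eq_id_if_mono_on_comp:
  assumes u: "strict_mono_on {..<k} (u :: nat \<Rightarrow> nat)" and s: "s permutes {..<k}"
    and mono: "mono_on {..<k} (u \<circ> s)"
  shows "s = id"
proof -
  have sk: "i < k \<Longrightarrow> s i < k" for i using permutes_in_image[OF s] by simp
  have "inj_on (u \<circ> s) {..<k}"
    by (rule comp_inj_on[OF permutes_inj_on[OF s]])
      (simp add: permutes_image[OF s] strict_mono_on_imp_inj_on[OF u])
  hence "strict_mono_on {..<k} (u \<circ> s)" using mono by (simp add: strict_mono_iff_mono)
  hence "strict_mono_on {..<k} s"
  proof (intro strict_mono_onI)
    fix i j assume ij: "i \<in> {..<k}" "j \<in> {..<k}" "i < j" and us: "strict_mono_on {..<k} (u \<circ> s)"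
    have "u (s i) < u (s j)" using strict_mono_onD[OF us ij] by simp
    thus "s i < s j" using strict_mono_on_leD[OF u, of "s j" "s i"] sk ij by (meson lessThan_iff not_le)
  qed
  hence "s i = i" if "i < k" for i
    using strict_mono_on_add_diff_le[of k s 0 i] strict_mono_on_add_diff_le[of k s i "k - 1"]
      sk[of "k - 1"] that by arith
  thus ?thesis using permutes_not_in[OF s] by (metis eq_id_iff lessThan_iff)
qed

lemma finite_strict_mono_enumeration:
  fixes X :: "nat set"
  assumes "finite X"
  obtains u where "strict_mono_on {..<card X} u" "u ` {..<card X} = X"
proof
  let ?xs = "sorted_list_of_set X"
  have len: "length ?xs = card X" by simp
  show "strict_mono_on {..<card X} (nth ?xs)"
    using sorted_wrt_nth_less[OF strict_sorted_list_of_set] len by (intro strict_mono_onI) auto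
  show "nth ?xs ` {..<card X} = X"
    using nth_image[of "length ?xs" ?xs] len assms by (simp add: atLeast0LessThan)
qed

lemma increasing_tuple_with_image:
  assumes t: "t \<in> tuples k m" and inj: "inj_on t {..<k}"
  obtains u where "u \<in> increasing_tuples k m" "u ` {..<k} = t ` {..<k}"
proof -
  let ?X = "t ` {..<k}"
  have card: "card ?X = k" using card_image[OF inj] by simp
  have "finite ?X" by simp
  then obtain e where "strict_mono_on {..<card ?X} e" "e ` {..<card ?X} = ?X"
    by (rule finite_strict_mono_enumeration)
  hence e: "strict_mono_on {..<k} e" "e ` {..<k} = ?X" unfolding card .
  define u where "u = restrict e {..<k}"
  have u_img: "u ` {..<k} = ?X" using e(2) by (simp add: u_def)
  have "u \<in> tuples k m"
    unfolding tuples_def PiE_iff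
  proof (intro conjI ballI)
    fix i assume "i \<in> {..<k}"
    hence "u i \<in> t ` {..<k}" using u_img by blast
    then obtain j where "j < k" "u i = t j" by auto
    thus "u i \<in> {..m}" using tuples_le[OF t] by simp
  qed (simp add: u_def)
  moreover have "strict_mono_on {..<k} u" using e(1) by (auto simp: u_def strict_mono_on_def)
  ultimately show ?thesis using that u_img by (simp add: increasing_tuples_def)
qed

lemma tuples_sort:
  assumes t: "t \<in> tuples k m" and inj: "inj_on t {..<k}"
  obtains u s where "u \<in> increasing_tuples k m" "s permutes {..<k}" "t = u \<circ> s"
proof -
  obtain u where u: "u \<in> increasing_tuples k m" and u_img: "u ` {..<k} = t ` {..<k}"
    by (rule increasing_tuple_with_image[OF t inj])
  have "inj_on u {..<k}"
    using u strict_mono_on_imp_inj_on by (auto simp: increasing_tuples_def)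
  hence bij_u: "bij_betw u {..<k} (t ` {..<k})" using u_img by (simp add: bij_betw_def)
  define s where "s = (\<lambda>i. if i < k then the_inv_into {..<k} u (t i) else i)"
  have "bij_betw t {..<k} (t ` {..<k})" using inj by (simp add: bij_betw_def)
  hence "bij_betw (the_inv_into {..<k} u \<circ> t) {..<k} {..<k}"
    by (rule bij_betw_trans[OF _ bij_betw_the_inv_into[OF bij_u]])
  moreover have "bij_betw s {..<k} {..<k} = bij_betw (the_inv_into {..<k} u \<circ> t) {..<k} {..<k}"
    by (rule bij_betw_cong) (simp add: s_def)
  ultimately have "bij_betw s {..<k} {..<k}" by simp
  hence s: "s permutes {..<k}" by (rule bij_imp_permutes) (simp add: s_def)
  have "t i = u (s i)" for i
  proof (cases "i < k")
    case True
    thus ?thesis using f_the_inv_into_f[OF bij_betw_imp_inj_on[OF bij_u]] u_img by (simp add: s_def)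
  next
    case False
    have "u \<in> tuples k m" using u by (simp add: increasing_tuples_def)
    thus ?thesis using tuples_undefined[OF t False] tuples_undefined[of u k m i] False by (simp add: s_def)
  qed
  hence "t = u \<circ> s" by (simp add: fun_eq_iff)
  with u s that show ?thesis by blast
qed

subsection \<open>Matrix coefficients of the symmetric powers\<close>

text \<open>A = [[a, b], [c, d]] acts on binary forms of degree m by
  x^s y^(m - s) \<mapsto> (a x + b y)^s (c x + d y)^(m - s); sym_coeff m A s u is the coefficient
  of x^u y^(m - u) in the image, computed by the binomial theorem.\<close>
definition sym_coeff :: "nat \<Rightarrow> complex^2^2 \<Rightarrow> nat \<Rightarrow> nat \<Rightarrow> complex" where
  "sym_coeff m A s u = (\<Sum>i\<le>s. \<Sum>j\<le>m - s. if i + j = u then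
      of_nat (s choose i) * of_nat ((m - s) choose j) *
      A$1$1 ^ i * A$1$2 ^ (s - i) * A$2$1 ^ j * A$2$2 ^ (m - s - j) else 0)"

lemma if_zero_mult: "(if P then a else 0) * b = (if P then a * b else (0::'a::mult_zero))"
  by simp

lemma sym_coeff_expansion:
  fixes x y :: complex
  assumes sm: "s \<le> m"
  shows "(A$1$1 * x + A$1$2 * y)^s * (A$2$1 * x + A$2$2 * y)^(m - s)
    = (\<Sum>u\<le>m. sym_coeff m A s u * x^u * y^(m - u))"
proof -
  define a b c d where "a = A$1$1" "b = A$1$2" "c = A$2$1" "d = A$2$2"
  define C where "C i j = of_nat (s choose i) * of_nat ((m - s) choose j) *
    a ^ i * b ^ (s - i) * c ^ j * d ^ (m - s - j)" for i j
  have "(a*x + b*y)^s * (c*x + d*y)^(m-s) =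
     (\<Sum>i\<le>s. of_nat (s choose i) * (a*x)^i * (b*y)^(s-i)) *
     (\<Sum>j\<le>m-s. of_nat ((m-s) choose j) * (c*x)^j * (d*y)^(m-s-j))"
    by (simp add: binomial_ring)
  also have "\<dots> = (\<Sum>i\<le>s. \<Sum>j\<le>m-s. C i j * x^(i+j) * y^(m-(i+j)))"
    unfolding sum_product
  proof (intro sum.cong refl)
    fix i j assume "i \<in> {..s}" "j \<in> {..m-s}"
    hence "m - (i + j) = (s - i) + (m - s - j)" using sm by auto
    thus "of_nat (s choose i) * (a*x)^i * (b*y)^(s-i) * (of_nat ((m-s) choose j) * (c*x)^j * (d*y)^(m-s-j))
       = C i j * x^(i+j) * y^(m-(i+j))"
      by (simp add: C_def power_add power_mult_distrib mult_ac)
  qed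
  also have "\<dots> = (\<Sum>i\<le>s. \<Sum>j\<le>m-s. \<Sum>u\<le>m. if i + j = u then C i j * x^u * y^(m-u) else 0)"
    using sm by (intro sum.cong refl) (simp add: sum.delta)
  also have "\<dots> = (\<Sum>u\<le>m. \<Sum>i\<le>s. \<Sum>j\<le>m-s. if i + j = u then C i j * x^u * y^(m-u) else 0)"
    by (subst sum.swap) (simp add: sum.swap[of _ "{..m-s}"])
  also have "\<dots> = (\<Sum>u\<le>m. sym_coeff m A s u * x^u * y^(m-u))"
    unfolding sym_coeff_def C_def a_b_c_d_def by (simp add: sum_distrib_right if_zero_mult mult.assoc)
  finally show ?thesis by (simp add: a_b_c_d_def)
qed

lemma sym_coeff_expansion_1:
  "s \<le> m \<Longrightarrow> (A$1$1 * x + A$1$2)^s * (A$2$1 * x + A$2$2)^(m - s) = (\<Sum>u\<le>m. sym_coeff m A s u * x^u)"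
  using sym_coeff_expansion[of s m A x 1] by simp

lemma polynomial_coeffs_unique:
  fixes p q :: "nat \<Rightarrow> complex"
  assumes "\<And>x. (\<Sum>u\<le>m. p u * x^u) = (\<Sum>u\<le>m. q u * x^u)" "u \<le> m"
  shows "p u = q u"
proof -
  define P Q where "P = (\<Sum>v\<le>m. monom (p v) v)" "Q = (\<Sum>v\<le>m. monom (q v) v)"
  have "poly P = poly Q" using assms(1) by (auto simp: P_Q_def poly_sum poly_monom)
  hence "coeff P u = coeff Q u" by (simp add: poly_eq_poly_eq_iff)
  thus ?thesis using assms(2) by (simp add: P_Q_def coeff_sum coeff_monom)
qed

lemma sym_coeff_mult:
  assumes "s \<le> m" "u \<le> m"
  shows "sym_coeff m (A ** B) s u = (\<Sum>t\<le>m. sym_coeff m A s t * sym_coeff m B t u)"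
proof (rule polynomial_coeffs_unique[OF _ assms(2)])
  fix x :: complex
  let ?X = "B$1$1 * x + B$1$2" and ?Y = "B$2$1 * x + B$2$2"
  have "(\<Sum>u\<le>m. sym_coeff m (A ** B) s u * x^u) = (A$1$1 * ?X + A$1$2 * ?Y)^s * (A$2$1 * ?X + A$2$2 * ?Y)^(m-s)"
    unfolding sym_coeff_expansion_1[OF assms(1), symmetric]
    by (simp add: matrix_matrix_mult_def sum_2 algebra_simps)
  also have "\<dots> = (\<Sum>t\<le>m. sym_coeff m A s t * ?X^t * ?Y^(m-t))"
    by (rule sym_coeff_expansion[OF assms(1)])
  also have "\<dots> = (\<Sum>t\<le>m. \<Sum>u\<le>m. sym_coeff m A s t * (sym_coeff m B t u * x^u))"
    by (simp add: sym_coeff_expansion_1 mult.assoc sum_distrib_left)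
  also have "\<dots> = (\<Sum>u\<le>m. (\<Sum>t\<le>m. sym_coeff m A s t * sym_coeff m B t u) * x^u)"
    by (subst sum.swap) (simp add: sum_distrib_right mult.assoc)
  finally show "(\<Sum>u\<le>m. sym_coeff m (A ** B) s u * x^u) = \<dots>" .
qed

lemma sum_atMost_if_le:
  fixes s m :: nat
  assumes "s \<le> m"
  shows "(\<Sum>u\<le>m. if u \<le> s then g u else 0) = (\<Sum>u\<le>s. g u)"
proof -
  have "{u \<in> {..m}. u \<le> s} = {..s}" using assms by auto
  thus ?thesis by (simp add: sum.inter_filter[symmetric])
qed

lemma sym_coeff_mat_1:
  assumes "s \<le> m" "u \<le> m"
  shows "sym_coeff m (mat 1) s u = (if u = s then 1 else 0)"
proof (rule polynomial_coeffs_unique[OF _ assms(2)])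
  fix x :: complex
  show "(\<Sum>u\<le>m. sym_coeff m (mat 1) s u * x^u) = (\<Sum>u\<le>m. (if u = s then 1 else 0) * x^u)"
    using sym_coeff_expansion_1[OF assms(1), of "mat 1" x] assms(1)
    by (simp add: mat_def if_zero_mult sum.delta)
qed

lemma sym_coeff_expE:
  assumes "s \<le> m" "u \<le> m"
  shows "sym_coeff m (expE t) s u = (if u \<le> s then of_nat (s choose u) * t^(s - u) else 0)"
proof (rule polynomial_coeffs_unique[OF _ assms(2)])
  fix x :: complex
  have "(\<Sum>u\<le>m. sym_coeff m (expE t) s u * x^u) = (x + t)^s"
    using sym_coeff_expansion_1[OF assms(1), of "expE t" x] by (simp add: expE_def)
  also have "\<dots> = (\<Sum>u\<le>s. of_nat (s choose u) * t^(s - u) * x^u)"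
    by (simp add: binomial_ring mult_ac)
  also have "\<dots> = (\<Sum>u\<le>m. if u \<le> s then of_nat (s choose u) * t^(s - u) * x^u else 0)"
    by (rule sum_atMost_if_le[OF assms(1), symmetric])
  also have "\<dots> = (\<Sum>u\<le>m. (if u \<le> s then of_nat (s choose u) * t^(s - u) else 0) * x^u)"
    by (simp only: if_zero_mult)
  finally show "(\<Sum>u\<le>m. sym_coeff m (expE t) s u * x^u) = \<dots>" .
qed

lemma sym_coeff_expF:
  assumes "s \<le> m" "u \<le> m"
  shows "sym_coeff m (expF t) s u = (if s \<le> u then of_nat ((m - s) choose (u - s)) * t^(u - s) else 0)"
proof (rule polynomial_coeffs_unique[OF _ assms(2)])
  fix x :: complex
  have "(\<Sum>u\<le>m. sym_coeff m (expF t) s u * x^u) = x^s * (t * x + 1)^(m - s)"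
    using sym_coeff_expansion_1[OF assms(1), of "expF t" x] by (simp add: expF_def)
  also have "\<dots> = (\<Sum>j\<le>m - s. of_nat ((m - s) choose j) * t^j * x^(j + s))"
    by (simp add: binomial_ring sum_distrib_left power_add power_mult_distrib mult_ac)
  also have "\<dots> = (\<Sum>u\<in>{s..m}. of_nat ((m - s) choose (u - s)) * t^(u - s) * x^u)"
    using sum.shift_bounds_cl_nat_ivl[of "\<lambda>u. of_nat ((m - s) choose (u - s)) * t^(u - s) * x^u" 0 s "m - s"]
      assms(1) by (simp add: atLeast0AtMost)
  also have "\<dots> = (\<Sum>u\<le>m. (if s \<le> u then of_nat ((m - s) choose (u - s)) * t^(u - s) else 0) * x^u)"
    by (simp add: if_zero_mult sum.inter_filter[symmetric] atMost_def atLeastAtMost_def Int_def conj_commute)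
  finally show "(\<Sum>u\<le>m. sym_coeff m (expF t) s u * x^u) = \<dots>" .
qed

lemma sym_coeff_expH:
  assumes "s \<le> m" "u \<le> m"
  shows "sym_coeff m (expH t) s u = (if u = s then exp t ^ s * exp (- t) ^ (m - s) else 0)"
proof (rule polynomial_coeffs_unique[OF _ assms(2)])
  fix x :: complex
  have "(\<Sum>u\<le>m. sym_coeff m (expH t) s u * x^u) = (exp t * x)^s * exp (- t) ^ (m - s)"
    using sym_coeff_expansion_1[OF assms(1), of "expH t" x] by (simp add: expH_def)
  also have "\<dots> = (\<Sum>u\<le>m. if u = s then exp t ^ s * exp (- t) ^ (m - s) * x^u else 0)"
    using assms(1) by (simp add: sum.delta power_mult_distrib mult_ac)
  finally show "(\<Sum>u\<le>m. sym_coeff m (expH t) s u * x^u) =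
      (\<Sum>u\<le>m. (if u = s then exp t ^ s * exp (- t) ^ (m - s) else 0) * x^u)"
    by (simp only: if_zero_mult)
qed

lemma continuous_on_sym_coeff: "continuous_on S (\<lambda>A. sym_coeff m A s u)"
proof -
  have entry: "continuous_on S (\<lambda>A::complex^2^2. A $ i $ j)" for i j
    by (intro linear_continuous_on bounded_linear_compose[OF bounded_linear_vec_nth bounded_linear_vec_nth])
  have cond: "continuous_on S (\<lambda>A. if P then f A else 0)" if "continuous_on S f" for P and f :: "_ \<Rightarrow> complex"
    using that by (cases P) auto
  show ?thesis unfolding sym_coeff_def by (intro continuous_on_sum cond continuous_intros entry)
qed

subsection \<open>The action on k-tuples and alternating functions\<close>

text \<open>Functions on k-tuples of exponents in {0..m} are coordinates on the k-th tensor power of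
  Sym^m; the alternating ones form its k-th exterior power.\<close>
definition tensor_action ::
  "nat \<Rightarrow> nat \<Rightarrow> complex^2^2 \<Rightarrow> ((nat \<Rightarrow> nat) \<Rightarrow> complex) \<Rightarrow> (nat \<Rightarrow> nat) \<Rightarrow> complex" where
  "tensor_action k m A c t = (\<Sum>u\<in>tuples k m. (\<Prod>i<k. sym_coeff m A (t i) (u i)) * c u)"

definition alternating :: "nat \<Rightarrow> nat \<Rightarrow> ((nat \<Rightarrow> nat) \<Rightarrow> complex) \<Rightarrow> bool" where
  "alternating k m c \<longleftrightarrow>
     (\<forall>t\<in>tuples k m. \<forall>s. s permutes {..<k} \<longrightarrow> c (t \<circ> s) = of_int (sign s) * c t)"

lemma tensor_action_cong:
  "(\<And>u. u \<in> tuples k m \<Longrightarrow> c u = d u) \<Longrightarrow> tensor_action k m A c t = tensor_action k m A d t"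
  unfolding tensor_action_def by (rule sum.cong) auto

lemma tensor_action_add:
  "tensor_action k m A (\<lambda>t. c t + d t) t = tensor_action k m A c t + tensor_action k m A d t"
  by (simp add: tensor_action_def distrib_left sum.distrib)

lemma tensor_action_scale: "tensor_action k m A (\<lambda>t. a * c t) t = a * tensor_action k m A c t"
  by (simp add: tensor_action_def sum_distrib_left mult_ac)

lemma tensor_action_mult:
  assumes t: "t \<in> tuples k m"
  shows "tensor_action k m (A ** B) c t = tensor_action k m A (tensor_action k m B c) t"
proof -
  let ?M = "\<lambda>A t u. \<Prod>i<k. sym_coeff m A (t i) (u i)"
  have prod: "?M (A ** B) t u = (\<Sum>v\<in>tuples k m. ?M A t v * ?M B v u)" if u: "u \<in> tuples k m" for u
  proof -
    have "?M (A ** B) t u = (\<Prod>i<k. \<Sum>w\<le>m. sym_coeff m A (t i) w * sym_coeff m B w (u i))"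
      using tuples_le[OF t] tuples_le[OF u] by (intro prod.cong refl sym_coeff_mult) auto
    also have "\<dots> = (\<Sum>v\<in>tuples k m. \<Prod>i<k. sym_coeff m A (t i) (v i) * sym_coeff m B (v i) (u i))"
      unfolding tuples_def by (rule prod_sum_PiE) auto
    finally show ?thesis by (simp add: prod.distrib)
  qed
  have "tensor_action k m A (tensor_action k m B c) t
      = (\<Sum>v\<in>tuples k m. \<Sum>u\<in>tuples k m. ?M A t v * ?M B v u * c u)"
    by (simp add: tensor_action_def sum_distrib_left mult.assoc)
  also have "\<dots> = (\<Sum>u\<in>tuples k m. (\<Sum>v\<in>tuples k m. ?M A t v * ?M B v u) * c u)"
    by (subst sum.swap) (simp add: sum_distrib_right)
  also have "\<dots> = tensor_action k m (A ** B) c t"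
    by (simp add: tensor_action_def prod)
  finally show ?thesis ..
qed

lemma tensor_action_mat_1:
  assumes t: "t \<in> tuples k m"
  shows "tensor_action k m (mat 1) c t = c t"
proof -
  have "(\<Prod>i<k. sym_coeff m (mat 1) (t i) (u i)) = (if u = t then 1 else 0)" if u: "u \<in> tuples k m" for u
  proof -
    have "(\<Prod>i<k. sym_coeff m (mat 1) (t i) (u i)) = (\<Prod>i<k. if u i = t i then 1 else 0)"
      using tuples_le[OF t] tuples_le[OF u] by (intro prod.cong refl sym_coeff_mat_1) auto
    also have "\<dots> = (if u = t then 1 else 0)"
      using tuples_eqI[OF u t] by (auto simp: prod_zero_iff)
    finally show ?thesis .
  qed
  hence "tensor_action k m (mat 1) c t = (\<Sum>u\<in>tuples k m. if u = t then c u else 0)"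
    unfolding tensor_action_def by (intro sum.cong) auto
  also have "\<dots> = c t" using t finite_tuples by (simp add: sum.delta')
  finally show ?thesis .
qed

lemma continuous_on_tensor_action: "continuous_on S (\<lambda>A. tensor_action k m A c t)"
  unfolding tensor_action_def by (intro continuous_intros continuous_on_sym_coeff)

text \<open>The tensor action commutes with permuting the k factors.\<close>
lemma alternating_tensor_action:
  assumes c: "alternating k m c"
  shows "alternating k m (tensor_action k m A c)"
  unfolding alternating_def
proof (intro ballI allI impI)
  fix t s assume t: "t \<in> tuples k m" and s: "s permutes {..<k}"
  let ?M = "\<lambda>t u. \<Prod>i<k. sym_coeff m A (t i) (u i)"
  have "tensor_action k m A c (t \<circ> s) = (\<Sum>u\<in>tuples k m. ?M (t \<circ> s) (u \<circ> s) * c (u \<circ> s))"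
    unfolding tensor_action_def by (rule sum.reindex_bij_betw[OF bij_betw_tuples_comp_permutes[OF s], symmetric])
  also have "\<dots> = (\<Sum>u\<in>tuples k m. of_int (sign s) * (?M t u * c u))"
  proof (rule sum.cong[OF refl])
    fix u assume "u \<in> tuples k m"
    moreover have "?M (t \<circ> s) (u \<circ> s) = ?M t u"
      using prod.permute[OF s, of "\<lambda>i. sym_coeff m A (t i) (u i)"] by (simp add: comp_def)
    ultimately show "?M (t \<circ> s) (u \<circ> s) * c (u \<circ> s) = of_int (sign s) * (?M t u * c u)"
      using c s by (simp add: alternating_def)
  qed
  also have "\<dots> = of_int (sign s) * tensor_action k m A c t"
    by (simp add: tensor_action_def sum_distrib_left)
  finally show "tensor_action k m A c (t \<circ> s) = of_int (sign s) * tensor_action k m A c t" .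
qed

lemma alternating_eq_0_if_not_inj:
  assumes c: "alternating k m c" and t: "t \<in> tuples k m" and not_inj: "\<not> inj_on t {..<k}"
  shows "c t = 0"
proof -
  obtain i j where ij: "i < k" "j < k" "i \<noteq> j" "t i = t j"
    using not_inj unfolding inj_on_def by auto
  let ?s = "Transposition.transpose i j"
  have s: "?s permutes {..<k}" using ij by (intro permutes_swap_id) auto
  have "t (?s x) = t x" for x using ij by (cases "x = i"; cases "x = j") auto
  hence "t \<circ> ?s = t" by (simp add: fun_eq_iff)
  hence "c t = of_int (sign ?s) * c t" using c t s unfolding alternating_def by metis
  also have "\<dots> = - c t" using ij by (simp add: sign_swap_id)
  finally show ?thesis by simp
qed

subsection \<open>The embedding of V_{k,l} into alternating functions\<close>

definition weight_factor :: "nat \<Rightarrow> nat \<Rightarrow> complex" where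
  "weight_factor m x = (-1)^x * of_nat (fact (m - x))"

text \<open>delta_mu is sent to weight k l mu times the wedge of the monomials at the particle
  positions of mu. The normalisation is what turns the differentials of the group action
  into exactly the operators E and F (see weight_moves_down).\<close>
definition weight :: "nat \<Rightarrow> nat \<Rightarrow> diagram \<Rightarrow> complex" where
  "weight k l mu = (\<Prod>i<k. weight_factor (k + l - 1) (positions k mu i))"

definition wedge_basis :: "nat \<Rightarrow> nat \<Rightarrow> diagram \<Rightarrow> (nat \<Rightarrow> nat) \<Rightarrow> complex" where
  "wedge_basis k l mu t = (\<Sum>s | s permutes {..<k}.
     if t = positions k mu \<circ> s then of_int (sign s) * weight k l mu else 0)"

definition to_wedge :: "nat \<Rightarrow> nat \<Rightarrow> (diagram \<Rightarrow> complex) \<Rightarrow> (nat \<Rightarrow> nat) \<Rightarrow> complex" where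
  "to_wedge k l f t = (\<Sum>mu\<in>rect_diagrams k l. wedge_basis k l mu t * f mu)"

definition of_wedge :: "nat \<Rightarrow> nat \<Rightarrow> ((nat \<Rightarrow> nat) \<Rightarrow> complex) \<Rightarrow> diagram \<Rightarrow> complex" where
  "of_wedge k l c mu = (if mu \<in> rect_diagrams k l then c (positions k mu) / weight k l mu else 0)"

definition sl2_action :: "nat \<Rightarrow> nat \<Rightarrow> complex^2^2 \<Rightarrow> (diagram \<Rightarrow> complex) \<Rightarrow> diagram \<Rightarrow> complex" where
  "sl2_action k l A f = of_wedge k l (tensor_action k (k + l - 1) A (to_wedge k l f))"

lemma weight_factor_nonzero: "weight_factor m x \<noteq> 0"
  by (simp add: weight_factor_def)

lemma weight_nonzero: "weight k l mu \<noteq> 0"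
  by (simp add: weight_def weight_factor_nonzero)

lemma to_wedge_add: "to_wedge k l (\<lambda>mu. f mu + g mu) = (\<lambda>t. to_wedge k l f t + to_wedge k l g t)"
  by (simp add: to_wedge_def distrib_left sum.distrib fun_eq_iff)

lemma to_wedge_scale: "to_wedge k l (\<lambda>mu. a * f mu) = (\<lambda>t. a * to_wedge k l f t)"
  by (simp add: to_wedge_def sum_distrib_left mult_ac fun_eq_iff)

lemma wedge_basis_mono_on:
  assumes lam: "lam \<in> rect_diagrams k l" and v: "mono_on {..<k} v"
  shows "wedge_basis k l lam v = (if v = positions k lam then weight k l lam else 0)"
proof -
  have "(if v = positions k lam \<circ> s then of_int (sign s) * weight k l lam else 0) =
        (if s = id then (if v = positions k lam then weight k l lam else 0) else 0)"
    if s: "s permutes {..<k}" for s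
  proof (cases "v = positions k lam \<circ> s")
    case True
    have "strict_mono_on {..<k} (positions k lam)"
      using positions_in_increasing_tuples[OF lam] by (simp add: increasing_tuples_def)
    hence "s = id" using permutes_eq_id_if_mono_on_comp s v True by blast
    thus ?thesis using True by simp
  qed auto
  hence "wedge_basis k l lam v = (\<Sum>s | s permutes {..<k}.
      if s = id then (if v = positions k lam then weight k l lam else 0) else 0)"
    unfolding wedge_basis_def by (intro sum.cong) auto
  thus ?thesis by (simp add: sum.delta permutes_id finite_permutations)
qed

lemma to_wedge_mono_on:
  "mono_on {..<k} v \<Longrightarrow>
    to_wedge k l f v = (\<Sum>lam\<in>rect_diagrams k l. if v = positions k lam then weight k l lam * f lam else 0)"
  unfolding to_wedge_def by (intro sum.cong) (simp_all add: wedge_basis_mono_on)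

lemma to_wedge_positions:
  assumes mu: "mu \<in> rect_diagrams k l"
  shows "to_wedge k l f (positions k mu) = weight k l mu * f mu"
proof -
  have "mono_on {..<k} (positions k mu)"
    using positions_in_increasing_tuples[OF mu]
    by (auto simp: increasing_tuples_def intro: strict_mono_on_imp_mono_on)
  hence "to_wedge k l f (positions k mu) =
      (\<Sum>lam\<in>rect_diagrams k l. if lam = mu then weight k l lam * f lam else 0)"
    using positions_inj[OF _ mu] by (auto simp: to_wedge_mono_on intro!: sum.cong)
  also have "\<dots> = weight k l mu * f mu" using mu finite_rect_diagrams by (simp add: sum.delta')
  finally show ?thesis .
qed

lemma of_wedge_to_wedge:
  assumes f: "f \<in> Vkl k l"
  shows "of_wedge k l (to_wedge k l f) = f"
proof
  fix mu show "of_wedge k l (to_wedge k l f) mu = f mu"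
    using weight_nonzero Vkl_vanishes[OF f]
    by (cases "mu \<in> rect_diagrams k l") (simp_all add: of_wedge_def to_wedge_positions)
qed

lemma wedge_basis_comp_permutes:
  assumes p: "p permutes {..<k}"
  shows "wedge_basis k l lam (t \<circ> p) = of_int (sign p) * wedge_basis k l lam t"
proof -
  have sign: "sign (s \<circ> p) = sign s * sign p" if "s permutes {..<k}" for s
    using sign_compose permutation_permutes finite_lessThan that p by blast
  have cancel: "t \<circ> p = positions k lam \<circ> (s \<circ> p) \<longleftrightarrow> t = positions k lam \<circ> s" for s
  proof
    assume "t \<circ> p = positions k lam \<circ> (s \<circ> p)"
    hence "t \<circ> p \<circ> inv p = positions k lam \<circ> s \<circ> p \<circ> inv p" by (simp add: comp_assoc)
    thus "t = positions k lam \<circ> s" by (simp add: comp_assoc permutes_inv_o(1)[OF p])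
  qed (simp add: comp_assoc)
  have "wedge_basis k l lam (t \<circ> p) = (\<Sum>s | s permutes {..<k}.
      if t \<circ> p = positions k lam \<circ> (s \<circ> p) then of_int (sign (s \<circ> p)) * weight k l lam else 0)"
    unfolding wedge_basis_def by (rule sum_permutations_compose_right[OF p])
  also have "\<dots> = (\<Sum>s | s permutes {..<k}.
      of_int (sign p) * (if t = positions k lam \<circ> s then of_int (sign s) * weight k l lam else 0))"
    by (intro sum.cong refl) (simp add: cancel sign)
  finally show ?thesis by (simp add: wedge_basis_def sum_distrib_left)
qed

lemma alternating_to_wedge: "alternating k m (to_wedge k l f)"
  by (simp add: alternating_def to_wedge_def wedge_basis_comp_permutes sum_distrib_left mult.assoc)

lemma positions_comp_permutes_inj:
  assumes lam: "lam \<in> rect_diagrams k l" and lam': "lam' \<in> rect_diagrams k l"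
    and s: "s permutes {..<k}" and s': "s' permutes {..<k}"
    and eq: "positions k lam \<circ> s = positions k lam' \<circ> s'"
  shows "lam = lam' \<and> s = s'"
proof -
  define r where "r = s' \<circ> inv s"
  have r: "r permutes {..<k}" unfolding r_def using permutes_compose[OF permutes_inv[OF s] s'] .
  have "positions k lam' \<circ> r = positions k lam \<circ> s \<circ> inv s"
    by (simp add: r_def eq comp_assoc)
  also have "\<dots> = positions k lam" using permutes_inv_o(1)[OF s] by (simp add: comp_assoc)
  finally have e: "positions k lam' \<circ> r = positions k lam" .
  have "strict_mono_on {..<k} (positions k lam')" "strict_mono_on {..<k} (positions k lam)"
    using positions_in_increasing_tuples[OF lam'] positions_in_increasing_tuples[OF lam]
    by (simp_all add: increasing_tuples_def)
  hence "r = id"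
    using permutes_eq_id_if_mono_on_comp[OF _ r, of "positions k lam'"] e
      strict_mono_on_imp_mono_on[of "{..<k}" "positions k lam"] by simp
  hence "lam = lam'" using e positions_inj[OF lam lam'] by simp
  moreover have "s' = s' \<circ> inv s \<circ> s" using permutes_inv_o(2)[OF s] by (simp add: comp_assoc)
  hence "s = s'" using \<open>r = id\<close> by (simp add: r_def)
  ultimately show ?thesis ..
qed

lemma sum_positions_comp_permutes_indicator:
  assumes t: "t \<in> tuples k (k + l - 1)" and inj: "inj_on t {..<k}"
  shows "(\<Sum>lam\<in>rect_diagrams k l. \<Sum>s | s permutes {..<k}.
            if t = positions k lam \<circ> s then 1 else 0 :: complex) = 1"
proof -
  let ?P = "{s. s permutes {..<k}}"
  obtain u s0 where u: "u \<in> increasing_tuples k (k + l - 1)" and s0: "s0 permutes {..<k}"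
    and tu: "t = u \<circ> s0"
    by (rule tuples_sort[OF t inj])
  obtain lam0 where lam0: "lam0 \<in> rect_diagrams k l" and ul: "u = positions k lam0"
    using increasing_tuple_eq_positions[OF u] .
  have "(\<Sum>s\<in>?P. if t = positions k lam \<circ> s then 1 else 0 :: complex) = (if lam = lam0 then 1 else 0)"
    if lam: "lam \<in> rect_diagrams k l" for lam
  proof -
    have "t = positions k lam \<circ> s \<longleftrightarrow> lam = lam0 \<and> s = s0" if s: "s \<in> ?P" for s
    proof
      assume "t = positions k lam \<circ> s"
      thus "lam = lam0 \<and> s = s0"
        using positions_comp_permutes_inj[OF lam lam0 _ s0, of s] s tu ul by simp
    qed (simp add: tu ul)
    hence "(\<Sum>s\<in>?P. if t = positions k lam \<circ> s then 1 else 0 :: complex)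
        = (\<Sum>s\<in>?P. if lam = lam0 \<and> s = s0 then 1 else 0)"
      by (intro sum.cong) simp_all
    thus ?thesis using s0 by (simp add: sum.delta finite_permutations)
  qed
  hence "(\<Sum>lam\<in>rect_diagrams k l. \<Sum>s\<in>?P. if t = positions k lam \<circ> s then 1 else 0 :: complex)
      = (\<Sum>lam\<in>rect_diagrams k l. if lam = lam0 then 1 else 0)"
    by (intro sum.cong) simp_all
  thus ?thesis using lam0 finite_rect_diagrams by simp
qed

lemma to_wedge_of_wedge:
  assumes c: "alternating k (k + l - 1) c" and t: "t \<in> tuples k (k + l - 1)"
  shows "to_wedge k l (of_wedge k l c) t = c t"
proof -
  let ?count = "\<lambda>lam. \<Sum>s | s permutes {..<k}. if t = positions k lam \<circ> s then 1 else 0 :: complex"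
  have "wedge_basis k l lam t * of_wedge k l c lam = ?count lam * c t"
    if lam: "lam \<in> rect_diagrams k l" for lam
    unfolding wedge_basis_def of_wedge_def sum_distrib_right
  proof (intro sum.cong refl)
    fix s assume "s \<in> {s. s permutes {..<k}}"
    hence "t = positions k lam \<circ> s \<Longrightarrow> c t = of_int (sign s) * c (positions k lam)"
      using c positions_in_tuples[OF lam] by (simp add: alternating_def)
    thus "(if t = positions k lam \<circ> s then of_int (sign s) * weight k l lam else 0) *
        (if lam \<in> rect_diagrams k l then c (positions k lam) / weight k l lam else 0) =
        (if t = positions k lam \<circ> s then 1 else 0) * c t"
      using lam weight_nonzero[of k l lam] by auto
  qed
  hence "to_wedge k l (of_wedge k l c) t = (\<Sum>lam\<in>rect_diagrams k l. ?count lam) * c t"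
    unfolding to_wedge_def sum_distrib_right by (intro sum.cong refl)
  moreover have "c t \<noteq> 0 \<Longrightarrow> inj_on t {..<k}"
    using alternating_eq_0_if_not_inj[OF c t] by blast
  ultimately show ?thesis using sum_positions_comp_permutes_indicator[OF t] by (cases "c t = 0") simp_all
qed

lemma sl2_action_in_Vkl: "sl2_action k l A f \<in> Vkl k l"
  by (simp add: Vkl_iff sl2_action_def of_wedge_def)

lemma sl2_action_mult:
  "sl2_action k l (A ** B) f = sl2_action k l A (sl2_action k l B f)"
proof -
  let ?m = "k + l - 1" and ?c = "to_wedge k l f"
  have "tensor_action k ?m A (to_wedge k l (sl2_action k l B f)) t =
      tensor_action k ?m A (tensor_action k ?m B ?c) t" for t
    unfolding sl2_action_def
    by (intro tensor_action_cong to_wedge_of_wedge alternating_tensor_action alternating_to_wedge)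
  moreover have "tensor_action k ?m (A ** B) ?c (positions k mu) =
      tensor_action k ?m A (tensor_action k ?m B ?c) (positions k mu)" if "mu \<in> rect_diagrams k l" for mu
    by (intro tensor_action_mult positions_in_tuples that)
  ultimately show ?thesis by (simp add: sl2_action_def of_wedge_def fun_eq_iff)
qed

lemma sl2_action_mat_1:
  assumes "f \<in> Vkl k l"
  shows "sl2_action k l (mat 1) f = f"
proof -
  have "tensor_action k (k + l - 1) (mat 1) (to_wedge k l f) (positions k mu) = to_wedge k l f (positions k mu)"
    if "mu \<in> rect_diagrams k l" for mu
    by (rule tensor_action_mat_1[OF positions_in_tuples[OF that]])
  hence "sl2_action k l (mat 1) f = of_wedge k l (to_wedge k l f)"
    by (simp add: sl2_action_def of_wedge_def fun_eq_iff)
  thus ?thesis using of_wedge_to_wedge[OF assms] by simp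
qed

lemma sl2_action_add:
  "sl2_action k l A (\<lambda>mu. f mu + g mu) = (\<lambda>mu. sl2_action k l A f mu + sl2_action k l A g mu)"
  by (simp add: sl2_action_def of_wedge_def to_wedge_add tensor_action_add add_divide_distrib fun_eq_iff)

lemma sl2_action_scale: "sl2_action k l A (\<lambda>mu. a * f mu) = (\<lambda>mu. a * sl2_action k l A f mu)"
  by (simp add: sl2_action_def of_wedge_def to_wedge_scale tensor_action_scale fun_eq_iff)

lemma continuous_on_sl2_action: "continuous_on S (\<lambda>A. sl2_action k l A f mu)"
  unfolding sl2_action_def of_wedge_def
  by (cases "mu \<in> rect_diagrams k l") (simp_all add: continuous_on_tensor_action continuous_on_divide weight_nonzero)

subsection \<open>Differentiating the action\<close>

lemma expE_0: "expE 0 = mat 1" and expF_0: "expF 0 = mat 1" and expH_0: "expH 0 = mat 1"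
  by (simp_all add: expE_def expF_def expH_def mat_def vec_eq_iff forall_2 vector_def)

lemma sum_tuples_upd:
  fixes F :: "(nat \<Rightarrow> nat) \<Rightarrow> complex"
  assumes s: "s \<in> tuples k m" and j: "j < k"
  shows "(\<Sum>u\<in>tuples k m. if \<forall>i\<in>{..<k} - {j}. u i = s i then F u else 0) = (\<Sum>v\<le>m. F (s(j := v)))"
proof -
  have "{u \<in> tuples k m. \<forall>i\<in>{..<k} - {j}. u i = s i} = (\<lambda>v. s(j := v)) ` {..m}"
  proof (intro equalityI subsetI)
    fix u assume "u \<in> {u \<in> tuples k m. \<forall>i\<in>{..<k} - {j}. u i = s i}"
    hence u: "u \<in> tuples k m" "\<forall>i\<in>{..<k} - {j}. u i = s i" by simp_all
    have "u j \<le> m" using tuples_le[OF u(1) j] .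
    moreover have "u = s(j := u j)"
      by (rule tuples_eqI[OF u(1) tuples_upd[OF s j \<open>u j \<le> m\<close>]]) (use u(2) in auto)
    ultimately show "u \<in> (\<lambda>v. s(j := v)) ` {..m}" by blast
  next
    fix u assume "u \<in> (\<lambda>v. s(j := v)) ` {..m}"
    thus "u \<in> {u \<in> tuples k m. \<forall>i\<in>{..<k} - {j}. u i = s i}" using tuples_upd[OF s j] by (auto split: if_split_asm)
  qed
  moreover have "inj_on (\<lambda>v. s(j := v)) {..m}" by (rule inj_onI) (metis fun_upd_same)
  ultimately show ?thesis
    by (simp add: sum.inter_filter[symmetric] finite_tuples sum.reindex)
qed

text \<open>Leibniz rule: at the identity only one factor of the product is differentiated, and
  all others are Kronecker deltas.\<close>
lemma has_field_derivative_tensor_action: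
  assumes s: "s \<in> tuples k m" and G0: "G 0 = mat 1"
    and dG: "\<And>a b. a \<le> m \<Longrightarrow> b \<le> m \<Longrightarrow> ((\<lambda>t. sym_coeff m (G t) a b) has_field_derivative D a b) (at 0)"
  shows "((\<lambda>t. tensor_action k m (G t) c s) has_field_derivative
           (\<Sum>j<k. \<Sum>v\<le>m. D (s j) v * c (s(j := v)))) (at 0)"
proof -
  have "((\<lambda>t. tensor_action k m (G t) c s) has_field_derivative
     (\<Sum>u\<in>tuples k m. (\<Sum>j<k. D (s j) (u j) * (\<Prod>i\<in>{..<k} - {j}. sym_coeff m (G 0) (s i) (u i))) * c u)) (at 0)"
    unfolding tensor_action_def
    by (intro DERIV_sum DERIV_cmult_right has_field_derivative_prod)
      (use dG tuples_le[OF s] tuples_le in auto)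
  also have "(\<Sum>u\<in>tuples k m. (\<Sum>j<k. D (s j) (u j) * (\<Prod>i\<in>{..<k} - {j}. sym_coeff m (G 0) (s i) (u i))) * c u)
     = (\<Sum>u\<in>tuples k m. \<Sum>j<k. if \<forall>i\<in>{..<k} - {j}. u i = s i then D (s j) (u j) * c u else 0)"
  proof (intro sum.cong refl)
    fix u assume u: "u \<in> tuples k m"
    have delta: "(\<Prod>i\<in>{..<k} - {j}. sym_coeff m (G 0) (s i) (u i)) =
        (if \<forall>i\<in>{..<k} - {j}. u i = s i then 1 else 0)" for j
    proof -
      have "(\<Prod>i\<in>{..<k} - {j}. sym_coeff m (G 0) (s i) (u i)) = (\<Prod>i\<in>{..<k} - {j}. if u i = s i then 1 else 0)"
        using tuples_le[OF s] tuples_le[OF u] by (intro prod.cong refl) (simp add: G0 sym_coeff_mat_1)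
      thus ?thesis by (auto simp: prod_zero_iff)
    qed
    show "(\<Sum>j<k. D (s j) (u j) * (\<Prod>i\<in>{..<k} - {j}. sym_coeff m (G 0) (s i) (u i))) * c u
      = (\<Sum>j<k. if \<forall>i\<in>{..<k} - {j}. u i = s i then D (s j) (u j) * c u else 0)"
      unfolding sum_distrib_right delta by (intro sum.cong refl) simp
  qed
  also have "\<dots> = (\<Sum>j<k. \<Sum>u\<in>tuples k m. if \<forall>i\<in>{..<k} - {j}. u i = s i then D (s j) (u j) * c u else 0)"
    by (rule sum.swap)
  also have "\<dots> = (\<Sum>j<k. \<Sum>v\<le>m. D (s j) v * c (s(j := v)))"
    by (intro sum.cong refl) (simp add: sum_tuples_upd[OF s])
  finally show ?thesis .
qed

lemma has_field_derivative_monomial_at_0: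
  "((\<lambda>t::complex. C * t ^ n) has_field_derivative (if n = 1 then C else 0)) (at 0)"
proof -
  have "((\<lambda>t::complex. C * t ^ n) has_field_derivative C * (of_nat n * 0 ^ (n - 1))) (at 0)"
    by (auto intro!: derivative_eq_intros)
  moreover have "C * (of_nat n * (0::complex) ^ (n - 1)) = (if n = 1 then C else 0)"
    by (cases n) auto
  ultimately show ?thesis by simp
qed

lemma has_field_derivative_sym_coeff_expE:
  assumes "a \<le> m" "b \<le> m"
  shows "((\<lambda>t. sym_coeff m (expE t) a b) has_field_derivative (if b + 1 = a then of_nat a else 0)) (at 0)"
proof (cases "b \<le> a")
  case True
  have "((\<lambda>t::complex. of_nat (a choose b) * t^(a - b)) has_field_derivative
      (if a - b = 1 then of_nat (a choose b) else 0)) (at 0)"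
    by (rule has_field_derivative_monomial_at_0)
  moreover have "(if a - b = 1 then of_nat (a choose b) else 0) = (if b + 1 = a then (of_nat a :: complex) else 0)"
    using True by (auto simp: choose_one)
  ultimately show ?thesis using True by (simp add: sym_coeff_expE[OF assms])
qed (simp add: sym_coeff_expE[OF assms])

lemma has_field_derivative_sym_coeff_expF:
  assumes "a \<le> m" "b \<le> m"
  shows "((\<lambda>t. sym_coeff m (expF t) a b) has_field_derivative (if b = a + 1 then of_nat (m - a) else 0)) (at 0)"
proof (cases "a \<le> b")
  case True
  have "((\<lambda>t::complex. of_nat ((m - a) choose (b - a)) * t^(b - a)) has_field_derivative
      (if b - a = 1 then of_nat ((m - a) choose (b - a)) else 0)) (at 0)"
    by (rule has_field_derivative_monomial_at_0)
  thus ?thesis using True by (auto simp: sym_coeff_expF[OF assms] choose_one cong: if_cong)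
qed (simp add: sym_coeff_expF[OF assms])

lemma has_field_derivative_sym_coeff_expH:
  assumes "a \<le> m" "b \<le> m"
  shows "((\<lambda>t. sym_coeff m (expH t) a b) has_field_derivative
           (if b = a then of_nat a - of_nat (m - a) else 0)) (at 0)"
proof (cases "b = a")
  case True
  have "sym_coeff m (expH t) a b = exp ((of_nat a - of_nat (m - a)) * t)" for t
    using sym_coeff_expH[OF assms, of t] True
    by (simp add: exp_of_nat_mult[symmetric] exp_add[symmetric] algebra_simps)
  moreover have "((\<lambda>t. exp ((of_nat a - of_nat (m - a)) * t)) has_field_derivative
      (of_nat a - of_nat (m - a))) (at (0::complex))"
    by (auto intro!: derivative_eq_intros)
  ultimately show ?thesis using True by simp
qed (simp add: sym_coeff_expH[OF assms])

lemma sl2_action_outside: "mu \<notin> rect_diagrams k l \<Longrightarrow> sl2_action k l A f mu = 0"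
  by (simp add: sl2_action_def of_wedge_def)

lemma has_field_derivative_sl2_action:
  assumes mu: "mu \<in> rect_diagrams k l" and G0: "G 0 = mat 1"
    and dG: "\<And>a b. a \<le> k + l - 1 \<Longrightarrow> b \<le> k + l - 1 \<Longrightarrow>
      ((\<lambda>t. sym_coeff (k + l - 1) (G t) a b) has_field_derivative D a b) (at 0)"
  shows "((\<lambda>t. sl2_action k l (G t) f mu) has_field_derivative
    (\<Sum>j<k. \<Sum>v\<le>k + l - 1. D (positions k mu j) v * to_wedge k l f ((positions k mu)(j := v)))
      / weight k l mu) (at 0)"
  unfolding sl2_action_def of_wedge_def if_P[OF mu]
  by (rule DERIV_cdivide[OF has_field_derivative_tensor_action[OF positions_in_tuples[OF mu] G0 dG]])

subsection \<open>Adding a box moves one particle\<close>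

definition covers_in_row :: "nat \<Rightarrow> diagram \<Rightarrow> diagram \<Rightarrow> nat \<Rightarrow> bool" where
  "covers_in_row k lam mu r \<longleftrightarrow> r \<in> {1..k} \<and> row_len mu r = row_len lam r + 1 \<and>
     (\<forall>r'\<in>{1..k} - {r}. row_len mu r' = row_len lam r')"

definition moves_down :: "nat \<Rightarrow> nat \<Rightarrow> diagram \<Rightarrow> diagram \<Rightarrow> bool" where
  "moves_down k j mu lam \<longleftrightarrow>
     j < k \<and> 1 \<le> positions k mu j \<and> (positions k mu)(j := positions k mu j - 1) = positions k lam"

lemma sum_eq_1_nat_obtain:
  fixes d :: "'a \<Rightarrow> nat"
  assumes "finite A" "(\<Sum>r\<in>A. d r) = 1"
  obtains r where "r \<in> A" "d r = 1" "\<forall>r'\<in>A - {r}. d r' = 0"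
proof -
  obtain r where r: "r \<in> A" "d r \<noteq> 0" using assms(2) sum.neutral by (metis zero_neq_one)
  have "d r + (\<Sum>r'\<in>A - {r}. d r') = 1" using sum.remove[OF assms(1) r(1), of d] assms(2) by simp
  hence "d r = 1" "(\<Sum>r'\<in>A - {r}. d r') = 0" using r(2) by linarith+
  thus ?thesis using that r(1) assms(1) by simp
qed

lemma rect_covers_iff_row:
  assumes lam: "lam \<in> rect_diagrams k l" and mu: "mu \<in> rect_diagrams k l"
  shows "lam \<nearrow> mu \<longleftrightarrow> (\<exists>r. covers_in_row k lam mu r)"
proof
  assume "lam \<nearrow> mu"
  hence sub: "lam \<subseteq> mu" and card: "card mu = card lam + 1" by (auto simp: covers_def)
  have le: "r \<in> {1..k} \<Longrightarrow> row_len lam r \<le> row_len mu r" for r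
    using sub rect_diagram_subset_iff[OF lam mu] by blast
  define d where "d r = row_len mu r - row_len lam r" for r
  have "(\<Sum>r=1..k. row_len mu r) = (\<Sum>r=1..k. row_len lam r) + (\<Sum>r=1..k. d r)"
    unfolding sum.distrib[symmetric] using le by (intro sum.cong) (auto simp: d_def)
  hence "(\<Sum>r=1..k. d r) = 1" using card card_rect_diagram[OF lam] card_rect_diagram[OF mu] by simp
  then obtain r where "r \<in> {1..k}" "d r = 1" "\<forall>r'\<in>{1..k} - {r}. d r' = 0"
    by (rule sum_eq_1_nat_obtain[OF finite_atLeastAtMost])
  moreover have "row_len mu r' = row_len lam r'" if "r' \<in> {1..k}" "d r' = 0" for r'
    using le[OF that(1)] that(2) by (simp add: d_def)
  moreover have "row_len mu r = row_len lam r + 1" if "r \<in> {1..k}" "d r = 1"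
    using le[OF that(1)] that(2) by (simp add: d_def)
  ultimately have "covers_in_row k lam mu r" by (simp add: covers_in_row_def)
  thus "\<exists>r. covers_in_row k lam mu r" ..
next
  assume "\<exists>r. covers_in_row k lam mu r"
  then obtain r where r: "covers_in_row k lam mu r" ..
  have r_in: "r \<in> {1..k}" using r by (simp add: covers_in_row_def)
  have "row_len lam r' \<le> row_len mu r'" if "r' \<in> {1..k}" for r'
    using r that by (cases "r' = r") (simp_all add: covers_in_row_def)
  hence "lam \<subseteq> mu" using rect_diagram_subset_iff[OF lam mu] by blast
  moreover have "(\<Sum>r'\<in>{1..k} - {r}. row_len mu r') = (\<Sum>r'\<in>{1..k} - {r}. row_len lam r')"
    using r by (intro sum.cong) (simp_all add: covers_in_row_def)
  hence "card mu = card lam + 1"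
    using r sum.remove[OF finite_atLeastAtMost r_in, of "row_len mu"]
      sum.remove[OF finite_atLeastAtMost r_in, of "row_len lam"]
    by (simp add: card_rect_diagram[OF lam] card_rect_diagram[OF mu] covers_in_row_def)
  ultimately show "lam \<nearrow> mu" using lam mu by (simp add: covers_def rect_diagrams_def)
qed

lemma moves_down_iff_covers_in_row:
  assumes j: "j < k"
  shows "moves_down k j mu lam \<longleftrightarrow> covers_in_row k lam mu (k - j)"
proof
  assume h: "moves_down k j mu lam"
  have eq: "(positions k mu)(j := positions k mu j - 1) = positions k lam"
    using h by (simp add: moves_down_def)
  have pos: "positions k lam i = (if i = j then positions k mu j - 1 else positions k mu i)" for i
    using fun_cong[OF eq, of i] by (simp split: if_splits)
  have "row_len lam (k - j) + j = row_len mu (k - j) + j - 1" "1 \<le> row_len mu (k - j) + j"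
    using pos[of j] h j by (simp_all add: moves_down_def positions_less)
  hence "row_len mu (k - j) = row_len lam (k - j) + 1" by arith
  moreover have "row_len mu r = row_len lam r" if "r \<in> {1..k} - {k - j}" for r
  proof -
    have "k - r < k" "k - r \<noteq> j" "k - (k - r) = r" using that j by auto
    thus ?thesis using pos[of "k - r"] by (simp add: positions_less)
  qed
  ultimately show "covers_in_row k lam mu (k - j)" using j by (simp add: covers_in_row_def)
next
  assume r: "covers_in_row k lam mu (k - j)"
  have "positions k lam i = ((positions k mu)(j := positions k mu j - 1)) i" for i
  proof (cases "i < k")
    case True
    show ?thesis
    proof (cases "i = j")
      case False
      hence "k - i \<in> {1..k} - {k - j}" using True j by auto
      thus ?thesis using r False True by (simp add: covers_in_row_def positions_less)
    qed (use r j in \<open>simp add: covers_in_row_def positions_less\<close>)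
  qed (use j in \<open>simp add: positions_def\<close>)
  moreover have "1 \<le> positions k mu j" using r j by (simp add: covers_in_row_def positions_less)
  ultimately show "moves_down k j mu lam" using j by (simp add: moves_down_def fun_eq_iff)
qed

lemma rect_covers_iff_moves_down:
  assumes "lam \<in> rect_diagrams k l" "mu \<in> rect_diagrams k l"
  shows "lam \<nearrow> mu \<longleftrightarrow> (\<exists>j. moves_down k j mu lam)"
proof -
  have "(\<exists>r. covers_in_row k lam mu r) \<longleftrightarrow> (\<exists>j<k. covers_in_row k lam mu (k - j))"
  proof
    assume "\<exists>r. covers_in_row k lam mu r"
    then obtain r where r: "covers_in_row k lam mu r" ..
    hence "k - r < k" "k - (k - r) = r" by (auto simp: covers_in_row_def)
    thus "\<exists>j<k. covers_in_row k lam mu (k - j)" using r by metis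
  qed blast
  also have "\<dots> \<longleftrightarrow> (\<exists>j. moves_down k j mu lam)"
    using moves_down_iff_covers_in_row unfolding moves_down_def by blast
  finally show ?thesis using rect_covers_iff_row[OF assms] by simp
qed

lemma moves_down_unique:
  assumes "moves_down k j mu lam" "moves_down k j' mu lam"
  shows "j = j'"
proof (rule ccontr)
  assume ne: "j \<noteq> j'"
  have eq: "(positions k mu)(j := positions k mu j - 1) = positions k lam"
    "(positions k mu)(j' := positions k mu j' - 1) = positions k lam" and pos: "1 \<le> positions k mu j'"
    using assms by (simp_all add: moves_down_def)
  have "positions k mu j' = positions k lam j'" using fun_cong[OF eq(1), of j'] ne by simp
  moreover have "positions k mu j' - 1 = positions k lam j'" using fun_cong[OF eq(2), of j'] by simp
  ultimately show False using pos by arith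
qed

lemma moves_down_diff:
  assumes lam: "lam \<in> rect_diagrams k l" and mu: "mu \<in> rect_diagrams k l"
    and down: "moves_down k j mu lam"
  shows "mu - lam = {(k - j, positions k mu j - j)}"
proof -
  have j: "j < k" using down by (simp add: moves_down_def)
  have r: "covers_in_row k lam mu (k - j)" using down moves_down_iff_covers_in_row[OF j] by simp
  show ?thesis
  proof (rule set_eqI)
    fix x :: "nat \<times> nat"
    obtain r c where x: "x = (r, c)" by fastforce
    show "x \<in> mu - lam \<longleftrightarrow> x \<in> {(k - j, positions k mu j - j)}"
      using rect_diagram_mem_iff[OF mu, of r c] rect_diagram_mem_iff[OF lam, of r c] r j x
      by (cases "r = k - j") (auto simp: covers_in_row_def positions_less)
  qed
qed

lemma moves_up_iff_moves_down:
  assumes lam: "lam \<in> rect_diagrams k l" and j: "j < k"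
  shows "(positions k mu j < k + l - 1 \<and> (positions k mu)(j := positions k mu j + 1) = positions k lam)
    \<longleftrightarrow> moves_down k j lam mu"
proof
  assume h: "positions k mu j < k + l - 1 \<and> (positions k mu)(j := positions k mu j + 1) = positions k lam"
  hence "positions k lam j = positions k mu j + 1" by (metis fun_upd_same)
  moreover have "(positions k lam)(j := positions k mu j) = positions k mu"
    using h by (metis fun_upd_triv fun_upd_upd)
  ultimately show "moves_down k j lam mu" using j by (simp add: moves_down_def)
next
  assume h: "moves_down k j lam mu"
  hence eq: "(positions k lam)(j := positions k lam j - 1) = positions k mu" and "1 \<le> positions k lam j"
    by (simp_all add: moves_down_def)
  hence "positions k mu j + 1 = positions k lam j" by (metis fun_upd_same le_add_diff_inverse2)
  moreover have "positions k lam j \<le> k + l - 1" using tuples_le[OF positions_in_tuples[OF lam] j] .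
  moreover have "(positions k mu)(j := positions k lam j) = positions k lam"
    using eq by (metis fun_upd_triv fun_upd_upd)
  ultimately show "positions k mu j < k + l - 1 \<and> (positions k mu)(j := positions k mu j + 1) = positions k lam"
    by simp
qed

lemma weight_factor_pred:
  assumes "1 \<le> x" "x \<le> m"
  shows "weight_factor m (x - 1) = - of_nat (Suc (m - x)) * weight_factor m x"
proof -
  have "m - (x - 1) = Suc (m - x)" using assms by simp
  moreover have "(-1::complex) ^ (x - 1) = - ((-1) ^ x)"
    using assms(1) by (cases x) simp_all
  ultimately show ?thesis
    unfolding weight_factor_def by (simp only: fact_Suc of_nat_mult of_nat_id) (simp add: algebra_simps del: of_nat_Suc)
qed

lemma weight_moves_down:
  assumes mu: "mu \<in> rect_diagrams k l" and down: "moves_down k j mu lam"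
  shows "weight k l lam = - of_nat (k + l - positions k mu j) * weight k l mu"
proof -
  let ?w = "\<lambda>x. weight_factor (k + l - 1) x" and ?p = "positions k mu"
  have j: "j < k" and x: "1 \<le> ?p j" and lam: "positions k lam = ?p(j := ?p j - 1)"
    using down by (simp_all add: moves_down_def)
  have le: "?p j \<le> k + l - 1" using tuples_le[OF positions_in_tuples[OF mu] j] .
  hence Suc: "Suc (k + l - Suc (?p j)) = k + l - ?p j" using j by simp
  have split: "weight k l nu = ?w (positions k nu j) * (\<Prod>i\<in>{..<k} - {j}. ?w (positions k nu i))" for nu
    unfolding weight_def using prod.remove[of "{..<k}" j] j by simp
  show ?thesis
    using split[of lam] split[of mu] weight_factor_pred[OF x le]
    by (simp add: lam Suc mult_ac del: of_nat_Suc)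
qed

lemma sum_moves_down_eq_covers:
  assumes lam: "lam \<in> rect_diagrams k l" and mu: "mu \<in> rect_diagrams k l"
    and g: "\<And>j. moves_down k j mu lam \<Longrightarrow> g j = c"
  shows "(\<Sum>j<k. if moves_down k j mu lam then g j else 0) = (if lam \<nearrow> mu then c else 0)"
proof (cases "lam \<nearrow> mu")
  case True
  then obtain j0 where j0: "moves_down k j0 mu lam" using rect_covers_iff_moves_down[OF lam mu] by blast
  hence "(\<Sum>j<k. if moves_down k j mu lam then g j else 0) = (\<Sum>j<k. if j = j0 then c else 0)"
    using moves_down_unique g by (intro sum.cong) auto
  also have "\<dots> = c" using j0 by (simp add: moves_down_def)
  finally show ?thesis using True by simp
next
  case False
  thus ?thesis using rect_covers_iff_moves_down[OF lam mu] by simp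
qed

lemma opE_coeff_eq_sum_moves_down:
  assumes lam: "lam \<in> rect_diagrams k l" and mu: "mu \<in> rect_diagrams k l"
  shows "(\<Sum>j<k. if moves_down k j mu lam then of_nat (positions k mu j) * weight k l lam / weight k l mu else 0)
    = (if lam \<nearrow> mu then gen_poch (of_nat k) (mu - lam) * gen_poch (- of_nat l) (mu - lam) else 0)"
proof (rule sum_moves_down_eq_covers[OF lam mu])
  fix j assume down: "moves_down k j mu lam"
  let ?x = "positions k mu j"
  have j: "j < k" using down by (simp add: moves_down_def)
  have x: "j \<le> ?x" "?x \<le> k + l - 1"
    using increasing_tuples_bounds(1)[OF positions_in_increasing_tuples[OF mu] j]
      tuples_le[OF positions_in_tuples[OF mu] j] by simp_all
  have content: "of_int (content (k - j, ?x - j)) = (of_nat ?x - of_nat k :: complex)"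
    using x j by (simp add: content_def of_nat_diff)
  have "of_nat ?x * weight k l lam / weight k l mu = - of_nat ?x * of_nat (k + l - ?x)"
    using weight_moves_down[OF mu down] weight_nonzero[of k l mu] by simp
  also have "\<dots> = (of_nat k + (of_nat ?x - of_nat k)) * (- of_nat l + (of_nat ?x - of_nat k))"
    using x j by (simp add: of_nat_diff algebra_simps)
  also have "\<dots> = gen_poch (of_nat k) (mu - lam) * gen_poch (- of_nat l) (mu - lam)"
    by (simp add: moves_down_diff[OF lam mu down] gen_poch_def content)
  finally show "of_nat ?x * weight k l lam / weight k l mu = \<dots>" .
qed

lemma opF_coeff_eq_sum_moves_down:
  assumes lam: "lam \<in> rect_diagrams k l" and mu: "mu \<in> rect_diagrams k l"
  shows "(\<Sum>j<k. if moves_down k j lam mu then of_nat (k + l - 1 - positions k mu j) * weight k l lam / weight k l mu else 0)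
    = (if mu \<nearrow> lam then -1 else 0)"
proof (rule sum_moves_down_eq_covers[OF mu lam])
  fix j assume down: "moves_down k j lam mu"
  have j: "j < k" using down by (simp add: moves_down_def)
  have eq: "(positions k lam)(j := positions k lam j - 1) = positions k mu" and "1 \<le> positions k lam j"
    using down by (simp_all add: moves_down_def)
  moreover have "positions k lam j - 1 = positions k mu j" using fun_cong[OF eq, of j] by simp
  ultimately have succ: "positions k mu j + 1 = positions k lam j" by arith
  have "positions k lam j \<le> k + l - 1" using tuples_le[OF positions_in_tuples[OF lam] j] .
  hence n: "k + l - positions k lam j = k + l - 1 - positions k mu j" "k + l - 1 - positions k mu j \<noteq> 0"
    using succ by simp_all
  have "weight k l mu = - of_nat (k + l - 1 - positions k mu j) * weight k l lam"
    using weight_moves_down[OF lam down] n(1) by simp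
  moreover have "c * w / (- c * w) = -1" if "c \<noteq> 0" "w \<noteq> 0" for c w :: complex
    using that by simp
  ultimately show "of_nat (k + l - 1 - positions k mu j) * weight k l lam / weight k l mu = -1"
    using weight_nonzero[of k l lam] n(2) of_nat_eq_0_iff by metis
qed

lemma mono_on_upd_strict_mono_on:
  fixes u :: "nat \<Rightarrow> nat"
  assumes u: "strict_mono_on {..<k} u"
  shows "mono_on {..<k} (u(j := u j - 1))" "mono_on {..<k} (u(j := u j + 1))"
proof -
  have lt: "u a < u b" if "a < b" "b < k" for a b
    using strict_mono_onD[OF u] that by simp
  show "mono_on {..<k} (u(j := u j - 1))" "mono_on {..<k} (u(j := u j + 1))"
    by (intro mono_onI; force dest: lt simp: le_less)+
qed

lemma sum_atMost_pred_delta: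
  fixes x m :: nat and g :: "nat \<Rightarrow> complex"
  assumes "x \<le> m"
  shows "(\<Sum>v\<le>m. (if v + 1 = x then a else 0) * g v) = (if 1 \<le> x then a * g (x - 1) else 0)"
proof (cases x)
  case (Suc y)
  hence "(\<Sum>v\<le>m. (if v + 1 = x then a else 0) * g v) = (\<Sum>v\<le>m. if v = y then a * g v else 0)"
    by (intro sum.cong) auto
  thus ?thesis using assms Suc by simp
qed simp

lemma sum_atMost_succ_delta:
  fixes x m :: nat and g :: "nat \<Rightarrow> complex"
  assumes "x \<le> m"
  shows "(\<Sum>v\<le>m. (if v = x + 1 then a else 0) * g v) = (if x < m then a * g (x + 1) else 0)"
proof -
  have "(\<Sum>v\<le>m. (if v = x + 1 then a else 0) * g v) = (\<Sum>v\<le>m. if v = x + 1 then a * g v else 0)"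
    by (intro sum.cong) auto
  thus ?thesis using assms by simp
qed

lemma to_wedge_updates_swap:
  assumes mono: "\<And>j. j < k \<Longrightarrow> P j \<Longrightarrow> mono_on {..<k} (v j)"
  shows "(\<Sum>j<k. if P j then a j * to_wedge k l f (v j) else 0) / w
    = (\<Sum>lam\<in>rect_diagrams k l. (\<Sum>j<k. if P j \<and> v j = positions k lam then a j * weight k l lam / w else 0) * f lam)"
proof -
  have "(if P j then a j * to_wedge k l f (v j) else 0) / w
      = (\<Sum>lam\<in>rect_diagrams k l. if P j \<and> v j = positions k lam then a j * weight k l lam / w * f lam else 0)"
    if j: "j < k" for j
  proof (cases "P j")
    case True
    hence "(if P j then a j * to_wedge k l f (v j) else 0) / w = (\<Sum>lam\<in>rect_diagrams k l.
        a j * (if v j = positions k lam then weight k l lam * f lam else 0) / w)"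
      by (simp add: to_wedge_mono_on[OF mono[OF j]] sum_distrib_left sum_divide_distrib)
    also have "\<dots> = (\<Sum>lam\<in>rect_diagrams k l. if P j \<and> v j = positions k lam then a j * weight k l lam / w * f lam else 0)"
      using True by (intro sum.cong) simp_all
    finally show ?thesis .
  qed simp
  hence "(\<Sum>j<k. if P j then a j * to_wedge k l f (v j) else 0) / w
      = (\<Sum>j<k. \<Sum>lam\<in>rect_diagrams k l. if P j \<and> v j = positions k lam then a j * weight k l lam / w * f lam else 0)"
    unfolding sum_divide_distrib by (intro sum.cong) simp_all
  also have "\<dots> = (\<Sum>lam\<in>rect_diagrams k l. (\<Sum>j<k. if P j \<and> v j = positions k lam then a j * weight k l lam / w else 0) * f lam)"
    by (subst sum.swap) (simp add: sum_distrib_right if_zero_mult)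
  finally show ?thesis .
qed

lemma sum_positions_balance:
  assumes k: "k > 0" and mu: "mu \<in> rect_diagrams k l"
  shows "(\<Sum>j<k. of_nat (positions k mu j) - of_nat (k + l - 1 - positions k mu j) :: complex)
    = 2 * of_nat (card mu) - of_nat k * of_nat l"
proof -
  have gauss: "(\<Sum>j<n. j) * 2 + n = n * n" for n :: nat
    by (induction n) (auto simp: algebra_simps)
  have "(\<Sum>j<k. positions k mu j) = (\<Sum>j<k. row_len mu (k - j)) + (\<Sum>j<k. j)"
    by (simp add: positions_less sum.distrib)
  also have "(\<Sum>j<k. row_len mu (k - j)) = card mu"
    unfolding card_rect_diagram[OF mu]
    by (rule sum.reindex_bij_witness[of _ "\<lambda>r. k - r" "\<lambda>j. k - j"]) auto
  finally have sum: "2 * of_nat (\<Sum>j<k. positions k mu j) = (2 * of_nat (card mu) + of_nat k * of_nat k - of_nat k :: complex)"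
    using arg_cong[OF gauss[of k], of "of_nat :: nat \<Rightarrow> complex"] by (simp add: algebra_simps)
  have m: "of_nat (k + l - 1) = (of_nat k + of_nat l - 1 :: complex)" using k by (simp add: of_nat_diff)
  have "(\<Sum>j<k. of_nat (positions k mu j) - of_nat (k + l - 1 - positions k mu j) :: complex)
      = (\<Sum>j<k. 2 * of_nat (positions k mu j) - (of_nat k + of_nat l - 1))"
  proof (intro sum.cong refl)
    fix j assume "j \<in> {..<k}"
    hence "of_nat (k + l - 1 - positions k mu j) = (of_nat (k + l - 1) - of_nat (positions k mu j) :: complex)"
      using tuples_le[OF positions_in_tuples[OF mu]] by (intro of_nat_diff) simp
    thus "of_nat (positions k mu j) - of_nat (k + l - 1 - positions k mu j) =
        (2 * of_nat (positions k mu j) - (of_nat k + of_nat l - 1) :: complex)"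
      unfolding m by simp
  qed
  also have "\<dots> = 2 * of_nat (\<Sum>j<k. positions k mu j) - of_nat k * (of_nat k + of_nat l - 1)"
    by (simp add: sum_subtractf sum_distrib_left)
  finally show ?thesis unfolding sum by (simp add: algebra_simps)
qed

lemma sum_rect_diagrams_covered_by:
  fixes c f :: "diagram \<Rightarrow> complex"
  assumes mu: "mu \<in> rect_diagrams k l"
  shows "(\<Sum>lam\<in>rect_diagrams k l. (if lam \<nearrow> mu then c lam else 0) * f lam) = (\<Sum>lam | lam \<nearrow> mu. c lam * f lam)"
proof -
  have "(\<Sum>lam\<in>rect_diagrams k l. (if lam \<nearrow> mu then c lam else 0) * f lam)
      = (\<Sum>lam\<in>rect_diagrams k l. if lam \<nearrow> mu then c lam * f lam else 0)"
    by (intro sum.cong) simp_all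
  also have "\<dots> = (\<Sum>lam | lam \<in> rect_diagrams k l \<and> lam \<nearrow> mu. c lam * f lam)"
    by (rule sum.inter_filter[symmetric, OF finite_rect_diagrams])
  also have "{lam. lam \<in> rect_diagrams k l \<and> lam \<nearrow> mu} = {lam. lam \<nearrow> mu}"
    using mu by (auto simp: covers_def rect_diagrams_def)
  finally show ?thesis .
qed

lemma sum_rect_diagrams_covering:
  assumes f: "f \<in> Vkl k l"
  shows "(\<Sum>lam\<in>rect_diagrams k l. (if mu \<nearrow> lam then -1 else 0) * f lam) = - (\<Sum>lam | mu \<nearrow> lam. f lam)"
proof -
  have "(\<Sum>lam\<in>rect_diagrams k l. (if mu \<nearrow> lam then -1 else 0) * f lam)
      = - (\<Sum>lam\<in>rect_diagrams k l. if mu \<nearrow> lam then f lam else 0)"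
    by (simp add: sum_negf[symmetric] if_zero_mult if_distrib[of uminus] cong: if_cong)
  also have "(\<Sum>lam\<in>rect_diagrams k l. if mu \<nearrow> lam then f lam else 0)
      = (\<Sum>lam | lam \<in> rect_diagrams k l \<and> mu \<nearrow> lam. f lam)"
    by (rule sum.inter_filter[symmetric, OF finite_rect_diagrams])
  also have "(\<Sum>lam | lam \<in> rect_diagrams k l \<and> mu \<nearrow> lam. f lam) = (\<Sum>lam | mu \<nearrow> lam. f lam)"
    using Vkl_vanishes[OF f] by (intro sum.mono_neutral_left finite_covering_diagrams) auto
  finally show ?thesis by simp
qed

lemma has_field_derivative_sl2_action_expE:
  assumes f: "f \<in> Vkl k l"
  shows "((\<lambda>t. sl2_action k l (expE t) f mu) has_field_derivative opE (of_nat k) (- of_nat l) f mu) (at 0)"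
proof (cases "mu \<in> rect_diagrams k l")
  case True
  let ?s = "positions k mu" and ?m = "k + l - 1"
  have mono: "strict_mono_on {..<k} ?s"
    using positions_in_increasing_tuples[OF True] by (simp add: increasing_tuples_def)
  have s_le: "j < k \<Longrightarrow> ?s j \<le> ?m" for j using tuples_le[OF positions_in_tuples[OF True]] .
  have "(\<Sum>j<k. \<Sum>v\<le>?m. (if v + 1 = ?s j then of_nat (?s j) else 0) * to_wedge k l f (?s(j := v))) / weight k l mu
      = (\<Sum>j<k. if 1 \<le> ?s j then of_nat (?s j) * to_wedge k l f (?s(j := ?s j - 1)) else 0) / weight k l mu"
    by (intro arg_cong[where f = "\<lambda>x. x / weight k l mu"] sum.cong refl sum_atMost_pred_delta s_le) simp
  also have "\<dots> = (\<Sum>lam\<in>rect_diagrams k l.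
      (\<Sum>j<k. if moves_down k j mu lam then of_nat (?s j) * weight k l lam / weight k l mu else 0) * f lam)"
    unfolding to_wedge_updates_swap[OF mono_on_upd_strict_mono_on(1)[OF mono]]
    by (intro sum.cong refl arg_cong2[where f = times]) (simp_all add: moves_down_def)
  also have "\<dots> = opE (of_nat k) (- of_nat l) f mu"
    by (simp add: opE_coeff_eq_sum_moves_down True sum_rect_diagrams_covered_by opE_def)
  finally show ?thesis
    using has_field_derivative_sl2_action[OF True expE_0 has_field_derivative_sym_coeff_expE, where f = f]
    by simp
next
  case False
  thus ?thesis using Vkl_vanishes[OF opE_preserves_Vkl[OF f]] by (simp add: sl2_action_outside)
qed

lemma has_field_derivative_sl2_action_expF:
  assumes f: "f \<in> Vkl k l"
  shows "((\<lambda>t. sl2_action k l (expF t) f mu) has_field_derivative opF f mu) (at 0)"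
proof (cases "mu \<in> rect_diagrams k l")
  case True
  let ?s = "positions k mu" and ?m = "k + l - 1"
  have mono: "strict_mono_on {..<k} ?s"
    using positions_in_increasing_tuples[OF True] by (simp add: increasing_tuples_def)
  have s_le: "j < k \<Longrightarrow> ?s j \<le> ?m" for j using tuples_le[OF positions_in_tuples[OF True]] .
  have "(\<Sum>j<k. \<Sum>v\<le>?m. (if v = ?s j + 1 then of_nat (?m - ?s j) else 0) * to_wedge k l f (?s(j := v))) / weight k l mu
      = (\<Sum>j<k. if ?s j < ?m then of_nat (?m - ?s j) * to_wedge k l f (?s(j := ?s j + 1)) else 0) / weight k l mu"
    by (intro arg_cong[where f = "\<lambda>x. x / weight k l mu"] sum.cong refl sum_atMost_succ_delta s_le) simp
  also have "\<dots> = (\<Sum>lam\<in>rect_diagrams k l.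
      (\<Sum>j<k. if moves_down k j lam mu then of_nat (?m - ?s j) * weight k l lam / weight k l mu else 0) * f lam)"
    unfolding to_wedge_updates_swap[OF mono_on_upd_strict_mono_on(2)[OF mono]]
  proof (intro sum.cong refl arg_cong2[where f = times])
    fix lam j assume "lam \<in> rect_diagrams k l" "j \<in> {..<k}"
    thus "(if ?s j < ?m \<and> ?s(j := ?s j + 1) = positions k lam
          then of_nat (?m - ?s j) * weight k l lam / weight k l mu else 0) =
        (if moves_down k j lam mu then of_nat (?m - ?s j) * weight k l lam / weight k l mu else 0)"
      using moves_up_iff_moves_down[of lam k l j mu] by simp
  qed
  also have "\<dots> = opF f mu"
    by (simp add: opF_coeff_eq_sum_moves_down True sum_rect_diagrams_covering[OF f] opF_def)
  finally show ?thesis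
    using has_field_derivative_sl2_action[OF True expF_0 has_field_derivative_sym_coeff_expF, where f = f]
    by simp
next
  case False
  thus ?thesis using Vkl_vanishes[OF opF_preserves_Vkl[OF f]] by (simp add: sl2_action_outside)
qed

lemma has_field_derivative_sl2_action_expH:
  assumes k: "k > 0" and f: "f \<in> Vkl k l"
  shows "((\<lambda>t. sl2_action k l (expH t) f mu) has_field_derivative opH (of_nat k) (- of_nat l) f mu) (at 0)"
proof (cases "mu \<in> rect_diagrams k l")
  case True
  let ?s = "positions k mu" and ?m = "k + l - 1"
  have s_le: "j < k \<Longrightarrow> ?s j \<le> ?m" for j using tuples_le[OF positions_in_tuples[OF True]] .
  have "(\<Sum>j<k. \<Sum>v\<le>?m. (if v = ?s j then of_nat (?s j) - of_nat (?m - ?s j) else 0) * to_wedge k l f (?s(j := v)))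
      = (\<Sum>j<k. (of_nat (?s j) - of_nat (?m - ?s j)) * to_wedge k l f ?s)"
  proof (intro sum.cong refl)
    fix j assume "j \<in> {..<k}"
    hence "?s j \<in> {..?m}" using s_le by simp
    thus "(\<Sum>v\<le>?m. (if v = ?s j then of_nat (?s j) - of_nat (?m - ?s j) else 0) * to_wedge k l f (?s(j := v)))
        = (of_nat (?s j) - of_nat (?m - ?s j)) * to_wedge k l f ?s"
      by (simp add: if_zero_mult sum.delta)
  qed
  also have "\<dots> = (\<Sum>j<k. of_nat (?s j) - of_nat (?m - ?s j)) * weight k l mu * f mu"
    by (simp add: sum_distrib_right to_wedge_positions[OF True] mult.assoc)
  finally have "(\<Sum>j<k. \<Sum>v\<le>?m. (if v = ?s j then of_nat (?s j) - of_nat (?m - ?s j) else 0) * to_wedge k l f (?s(j := v)))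
      / weight k l mu = opH (of_nat k) (- of_nat l) f mu"
    using weight_nonzero[of k l mu] sum_positions_balance[OF k True] by (simp add: opH_def size_diag_def)
  thus ?thesis
    using has_field_derivative_sl2_action[OF True expH_0 has_field_derivative_sym_coeff_expH, where f = f]
    by simp
next
  case False
  thus ?thesis using Vkl_vanishes[OF opH_preserves_Vkl[OF f]] by (simp add: sl2_action_outside)
qed

theorem lemma4p3:
  fixes k l :: nat and z z' :: complex
  assumes "k > 0" and "l > 0"
    and "z = of_nat k" and "z' = - of_nat l"
  shows "(\<forall>f\<in>Vkl k l. opE z z' f \<in> Vkl k l \<and> opF f \<in> Vkl k l \<and> opH z z' f \<in> Vkl k l)
    \<and> (\<exists>rho. is_SL2_lift rho (Vkl k l) (opE z z') opF (opH z z'))"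
proof
  show "\<forall>f\<in>Vkl k l. opE z z' f \<in> Vkl k l \<and> opF f \<in> Vkl k l \<and> opH z z' f \<in> Vkl k l"
    using opE_preserves_Vkl opF_preserves_Vkl opH_preserves_Vkl assms(3,4) by blast
  have "is_SL2_lift (sl2_action k l) (Vkl k l) (opE z z') opF (opH z z')"
    unfolding is_SL2_lift_def assms(3,4)
    by (simp add: sl2_action_in_Vkl sl2_action_add sl2_action_scale sl2_action_mat_1 sl2_action_mult
        continuous_on_sl2_action has_field_derivative_sl2_action_expE has_field_derivative_sl2_action_expF
        has_field_derivative_sl2_action_expH[OF assms(1)])
  thus "\<exists>rho. is_SL2_lift rho (Vkl k l) (opE z z') opF (opH z z')" by blast
qed

end
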